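(* Let $(M,\tau)$ be a tracial von Neumann algebra, $m,n\in\mathbb N$, $x=(x_1,\dots,x_m)\in M_{\mathrm{sa},1}^m$ and $y=(y_1,\dots,y_n)\in M_{\mathrm{sa},1}^n$. Set $\delta_0=\delta(x,y)$, $\varepsilon_0=\varepsilon(x,y)$, $\gamma_0=\gamma(x,y)$, and assume $13mn\sqrt{\varepsilon_0}<\delta_0^2-(mn-1)\gamma_0$. Then there exists $v\in\mathscr U(M)$ such that $$\|v-1\|_\infty\leq\frac{8mn\varepsilon_0}{\delta_0^2-(mn-1)\gamma_0}\leq\frac{8}{13}\sqrt{\varepsilon_0}\quad\text{and}\quad\varepsilon(vxv^*,y)=0.$$
   Context: $M_{\mathrm{sa},1}=\{a\in M:a=a^*,\|a\|_\infty\leq1\}$. For $u\in\mathscr U(M)$, $uxu^*=(ux_1u^*,\dots,ux_mu^* )$. For $x\in M^m$, $y\in M^n$: $\delta(x,y)=\min_{i,j}\|[x_i,y_j]\|_2$; $\varepsilon(x,y)=\max_{i,j}|\tau(x_iy_j)|$; $\gamma(x,y)=\max\{|\langle[x_i,y_j],[x_{i'},y_{j'}]\rangle|:(i,j)\neq(i',j')\}$, with $\langle a,b\rangle=\tau(b^*a)$ and indices $1\leq i,i'\leq m$, $1\leq j,j'\leq n$. *)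

theory Defs
  imports "HOL-Analysis.Analysis"
begin

text \<open>
  Complex Hilbert spaces are modelled as real Hilbert spaces (type class
  real_inner plus complete_space) equipped with an orthogonal complex structure J
  (J is the multiplication by the imaginary unit).  Bounded complex-linear operators
  are the bounded real-linear operators commuting with J.  The operator norm of such
  an operator (w.r.t. the complex Hilbert norm, which coincides with the real norm)
  is the blinfun norm.
\<close>

definition cstruct :: "('h::{real_inner,complete_space} \<Rightarrow>\<^sub>L 'h) \<Rightarrow> bool" where
  "cstruct J \<longleftrightarrow> J o\<^sub>L J = - id_blinfun \<and> (\<forall>x y. inner (J x) (J y) = inner x y)"

definition cscale :: "('h::{real_inner,complete_space} \<Rightarrow>\<^sub>L 'h) \<Rightarrow> complex \<Rightarrow> ('h \<Rightarrow>\<^sub>L 'h) \<Rightarrow> ('h \<Rightarrow>\<^sub>L 'h)" where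
  "cscale J c T = Re c *\<^sub>R T + Im c *\<^sub>R (J o\<^sub>L T)"

definition BH :: "('h::{real_inner,complete_space} \<Rightarrow>\<^sub>L 'h) \<Rightarrow> ('h \<Rightarrow>\<^sub>L 'h) set" where
  "BH J = {T. T o\<^sub>L J = J o\<^sub>L T}"

text \<open>Hilbert space adjoint (for complex-linear operators the real and complex adjoints agree)\<close>
definition adj :: "('h::{real_inner,complete_space} \<Rightarrow>\<^sub>L 'h) \<Rightarrow> ('h \<Rightarrow>\<^sub>L 'h)" where
  "adj T = (THE S :: 'h \<Rightarrow>\<^sub>L 'h. \<forall>x y. inner (T x) y = inner x (S y))"

definition commutant :: "('h::{real_inner,complete_space} \<Rightarrow>\<^sub>L 'h) \<Rightarrow> ('h \<Rightarrow>\<^sub>L 'h) set \<Rightarrow> ('h \<Rightarrow>\<^sub>L 'h) set" where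
  "commutant J S = {T \<in> BH J. \<forall>s\<in>S. T o\<^sub>L s = s o\<^sub>L T}"

text \<open>von Neumann algebra: a self-adjoint subset of B(H) equal to its bicommutant
  (equivalently, a unital WOT-closed *-subalgebra of B(H))\<close>
definition von_neumann_algebra :: "('h::{real_inner,complete_space} \<Rightarrow>\<^sub>L 'h) \<Rightarrow> ('h \<Rightarrow>\<^sub>L 'h) set \<Rightarrow> bool" where
  "von_neumann_algebra J M \<longleftrightarrow> cstruct J \<and> M \<subseteq> BH J \<and> (\<forall>T\<in>M. adj T \<in> M)
     \<and> commutant J (commutant J M) = M"

definition selfadj :: "('h::{real_inner,complete_space} \<Rightarrow>\<^sub>L 'h) \<Rightarrow> bool" where
  "selfadj T \<longleftrightarrow> adj T = T"

text \<open>positive operator (for self-adjoint complex-linear T, the complex quadratic form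
  is real and equals the real one)\<close>
definition positive_op :: "('h::{real_inner,complete_space} \<Rightarrow>\<^sub>L 'h) \<Rightarrow> bool" where
  "positive_op T \<longleftrightarrow> selfadj T \<and> (\<forall>x. 0 \<le> inner (T x) x)"

definition op_le :: "('h::{real_inner,complete_space} \<Rightarrow>\<^sub>L 'h) \<Rightarrow> ('h \<Rightarrow>\<^sub>L 'h) \<Rightarrow> bool" where
  "op_le S T \<longleftrightarrow> positive_op (T - S)"

definition tracial_state :: "('h::{real_inner,complete_space} \<Rightarrow>\<^sub>L 'h) \<Rightarrow> ('h \<Rightarrow>\<^sub>L 'h) set \<Rightarrow> (('h \<Rightarrow>\<^sub>L 'h) \<Rightarrow> complex) \<Rightarrow> bool" where
  "tracial_state J M \<tau> \<longleftrightarrow>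
     (\<forall>S\<in>M. \<forall>T\<in>M. \<tau> (S + T) = \<tau> S + \<tau> T)
   \<and> (\<forall>c. \<forall>T\<in>M. \<tau> (cscale J c T) = c * \<tau> T)
   \<and> (\<forall>T\<in>M. \<tau> (adj T o\<^sub>L T) \<in> \<real> \<and> 0 \<le> Re (\<tau> (adj T o\<^sub>L T)))
   \<and> \<tau> id_blinfun = 1
   \<and> (\<forall>S\<in>M. \<forall>T\<in>M. \<tau> (S o\<^sub>L T) = \<tau> (T o\<^sub>L S))
   \<and> (\<forall>T\<in>M. \<tau> (adj T o\<^sub>L T) = 0 \<longrightarrow> T = 0)
   \<and> (\<forall>D T. D \<subseteq> M \<and> D \<noteq> {} \<and> (\<forall>a\<in>D. positive_op a)
        \<and> (\<forall>a\<in>D. \<forall>b\<in>D. \<exists>c\<in>D. op_le a c \<and> op_le b c)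
        \<and> T \<in> M \<and> (\<forall>a\<in>D. op_le a T) \<and> (\<forall>S\<in>M. (\<forall>a\<in>D. op_le a S) \<longrightarrow> op_le T S)
        \<longrightarrow> Re (\<tau> T) = (SUP a\<in>D. Re (\<tau> a)))"

definition tracial_vNa :: "('h::{real_inner,complete_space} \<Rightarrow>\<^sub>L 'h) \<Rightarrow> ('h \<Rightarrow>\<^sub>L 'h) set \<Rightarrow> (('h \<Rightarrow>\<^sub>L 'h) \<Rightarrow> complex) \<Rightarrow> bool" where
  "tracial_vNa J M \<tau> \<longleftrightarrow> von_neumann_algebra J M \<and> tracial_state J M \<tau>"

definition Msa1 :: "('h::{real_inner,complete_space} \<Rightarrow>\<^sub>L 'h) set \<Rightarrow> ('h \<Rightarrow>\<^sub>L 'h) set" where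
  "Msa1 M = {a \<in> M. selfadj a \<and> norm a \<le> 1}"

definition unitaries :: "('h::{real_inner,complete_space} \<Rightarrow>\<^sub>L 'h) set \<Rightarrow> ('h \<Rightarrow>\<^sub>L 'h) set" where
  "unitaries M = {u \<in> M. adj u o\<^sub>L u = id_blinfun \<and> u o\<^sub>L adj u = id_blinfun}"

definition norm2 :: "(('h::{real_inner,complete_space} \<Rightarrow>\<^sub>L 'h) \<Rightarrow> complex) \<Rightarrow> ('h \<Rightarrow>\<^sub>L 'h) \<Rightarrow> real" where
  "norm2 \<tau> a = sqrt (Re (\<tau> (adj a o\<^sub>L a)))"

definition commut :: "('h::{real_inner,complete_space} \<Rightarrow>\<^sub>L 'h) \<Rightarrow> ('h \<Rightarrow>\<^sub>L 'h) \<Rightarrow> ('h \<Rightarrow>\<^sub>L 'h)" where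
  "commut a b = (a o\<^sub>L b) - (b o\<^sub>L a)"

definition tip :: "(('h::{real_inner,complete_space} \<Rightarrow>\<^sub>L 'h) \<Rightarrow> complex) \<Rightarrow> ('h \<Rightarrow>\<^sub>L 'h) \<Rightarrow> ('h \<Rightarrow>\<^sub>L 'h) \<Rightarrow> complex" where
  "tip \<tau> a b = \<tau> (adj b o\<^sub>L a)"

text \<open>Tuples x = (x_1..x_m) are functions on indices 0..<m.\<close>
definition delta :: "(('h::{real_inner,complete_space} \<Rightarrow>\<^sub>L 'h) \<Rightarrow> complex) \<Rightarrow> nat \<Rightarrow> nat \<Rightarrow> (nat \<Rightarrow> ('h \<Rightarrow>\<^sub>L 'h)) \<Rightarrow> (nat \<Rightarrow> ('h \<Rightarrow>\<^sub>L 'h)) \<Rightarrow> real" where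
  "delta \<tau> m n x y = Min {norm2 \<tau> (commut (x i) (y j)) | i j. i < m \<and> j < n}"

definition epsilon :: "(('h::{real_inner,complete_space} \<Rightarrow>\<^sub>L 'h) \<Rightarrow> complex) \<Rightarrow> nat \<Rightarrow> nat \<Rightarrow> (nat \<Rightarrow> ('h \<Rightarrow>\<^sub>L 'h)) \<Rightarrow> (nat \<Rightarrow> ('h \<Rightarrow>\<^sub>L 'h)) \<Rightarrow> real" where
  "epsilon \<tau> m n x y = Max {cmod (\<tau> (x i o\<^sub>L y j)) | i j. i < m \<and> j < n}"

text \<open>gamma: maximum over pairs of distinct index pairs; taken to be 0 if there is
  no such pair (m = n = 1), which is harmless since it is multiplied by mn - 1 = 0.
  Inserting 0 does not change the maximum otherwise, as all values are nonnegative.\<close>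
definition gamma :: "(('h::{real_inner,complete_space} \<Rightarrow>\<^sub>L 'h) \<Rightarrow> complex) \<Rightarrow> nat \<Rightarrow> nat \<Rightarrow> (nat \<Rightarrow> ('h \<Rightarrow>\<^sub>L 'h)) \<Rightarrow> (nat \<Rightarrow> ('h \<Rightarrow>\<^sub>L 'h)) \<Rightarrow> real" where
  "gamma \<tau> m n x y = Max (insert 0
     {cmod (tip \<tau> (commut (x i) (y j)) (commut (x i') (y j'))) | i j i' j'.
        i < m \<and> j < n \<and> i' < m \<and> j' < n \<and> (i, j) \<noteq> (i', j')})"

definition conj_tuple :: "('h::{real_inner,complete_space} \<Rightarrow>\<^sub>L 'h) \<Rightarrow> (nat \<Rightarrow> ('h \<Rightarrow>\<^sub>L 'h)) \<Rightarrow> (nat \<Rightarrow> ('h \<Rightarrow>\<^sub>L 'h))" where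
  "conj_tuple u x = (\<lambda>i. u o\<^sub>L x i o\<^sub>L adj u)"

end

(*
  Look for v as the Cayley transform v = (1 + A/2)(1 - A/2)^-1 of a skew-adjoint combination
  A = sum c_ij [x_i, y_j] of the commutators: v is unitary, ||v - 1|| <= 6/5 ||A|| for ||A|| <= 1/3,
  and v x_i v^* = x_i + [A, x_i] + O(||A||^2). Since tau([A, x_i] y_j) = tau(A [x_i, y_j]), the
  conditions tau(v x_i v^* y_j) = 0 (these traces are automatically real) form the linear system
  sum_kl c_kl Re <[x_i, y_j], [x_k, y_l]> = Re tau(x_i y_j) up to a quadratic perturbation. Its Gram
  matrix has diagonal entries >= delta^2 and off-diagonal entries of modulus <= gamma, so once
  13 mn sqrt(eps) < D = delta^2 - (mn - 1) gamma the Jacobi iteration maps the box |c_ij| <= 2 eps / D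
  into itself and contracts it. Its fixed point has ||A|| <= 4 mn eps / D, whence ||v - 1|| <= 8 mn eps / D.
*)

theory Submission
  imports Defs
begin

interpretation blinfun_compose: bounded_bilinear blinfun_compose
  by (rule bounded_bilinear_blinfun_compose)

lemma blinfun_compose_assoc: "(A o\<^sub>L B) o\<^sub>L C = A o\<^sub>L (B o\<^sub>L C)"
  by (rule blinfun_eqI) simp

lemma blinfun_compose_id [simp]:
  "id_blinfun o\<^sub>L A = A" "A o\<^sub>L id_blinfun = A"
  by (auto intro: blinfun_eqI)

lemma norm_blinfun_compose_diff:
  "norm ((A o\<^sub>L B) - (A' o\<^sub>L B')) \<le> norm (A - A') * norm B + norm A' * norm (B - B')"
proof -
  have "(A o\<^sub>L B) - (A' o\<^sub>L B') = ((A - A') o\<^sub>L B) + (A' o\<^sub>L (B - B'))"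
    by (simp add: blinfun_compose.diff_left blinfun_compose.diff_right)
  then have "norm ((A o\<^sub>L B) - (A' o\<^sub>L B')) \<le> norm ((A - A') o\<^sub>L B) + norm (A' o\<^sub>L (B - B'))"
    by (simp add: norm_triangle_ineq)
  also have "\<dots> \<le> norm (A - A') * norm B + norm A' * norm (B - B')"
    by (intro add_mono norm_blinfun_compose)
  finally show ?thesis .
qed

lemma norm_blinfun_compose_le:
  assumes "norm A \<le> a" and "norm B \<le> b"
  shows "norm (A o\<^sub>L B) \<le> a * b"
  by (rule order_trans[OF norm_blinfun_compose mult_mono]) (use assms norm_ge_zero order_trans in blast)+

lemma norm_add3_le: "norm (u + v + w) \<le> norm u + norm v + norm w"
  using norm_triangle_ineq[of "u + v" w] norm_triangle_ineq[of u v] by linarith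

lemma mult_le_one_right:
  fixes k u v :: real
  assumes "0 \<le> k" "0 \<le> u" "u \<le> 1" "0 \<le> v" "v \<le> 1"
  shows "k * u * v \<le> k"
proof -
  have "u * v \<le> 1" using assms(3-5) by (rule mult_le_one)
  then have "k * (u * v) \<le> k * 1" using assms(1) by (rule mult_left_mono)
  then show ?thesis by (simp add: mult.assoc)
qed

lemma compose_commute:
  assumes "A o\<^sub>L S = S o\<^sub>L A" and "B o\<^sub>L S = S o\<^sub>L B"
  shows "(A o\<^sub>L B) o\<^sub>L S = S o\<^sub>L (A o\<^sub>L B)"
proof -
  have "(A o\<^sub>L B) o\<^sub>L S = A o\<^sub>L (S o\<^sub>L B)" by (simp add: blinfun_compose_assoc assms(2))
  also have "\<dots> = S o\<^sub>L (A o\<^sub>L B)" by (simp add: blinfun_compose_assoc[symmetric] assms(1))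
  finally show ?thesis .
qed

lemma inverse_commute:
  assumes "W o\<^sub>L X = id_blinfun" and "X o\<^sub>L W = id_blinfun" and "X o\<^sub>L S = S o\<^sub>L X"
  shows "W o\<^sub>L S = S o\<^sub>L W"
proof -
  have "W o\<^sub>L S = W o\<^sub>L S o\<^sub>L (X o\<^sub>L W)" by (simp add: assms(2))
  also have "\<dots> = W o\<^sub>L (X o\<^sub>L S) o\<^sub>L W" by (simp add: blinfun_compose_assoc assms(3))
  also have "\<dots> = S o\<^sub>L W" by (simp add: blinfun_compose_assoc[symmetric] assms(1))
  finally show ?thesis .
qed

lemma blinfun_inverse_unique:
  assumes "W o\<^sub>L X = id_blinfun" and "X o\<^sub>L W' = id_blinfun"
  shows "W = W'"
proof -
  have "W = W o\<^sub>L (X o\<^sub>L W')" using assms(2) by simp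
  also have "\<dots> = (W o\<^sub>L X) o\<^sub>L W'" by (simp add: blinfun_compose_assoc)
  finally show ?thesis using assms(1) by simp
qed

section \<open>Adjoints of bounded operators on a real Hilbert space\<close>

lemma minimizing_sequence_Cauchy:
  fixes u :: "nat \<Rightarrow> 'a::real_inner"
  assumes "convex C" and u: "\<And>k. u k \<in> C" and d: "\<And>w. w \<in> C \<Longrightarrow> d \<le> (norm w)\<^sup>2"
    and u_bound: "\<And>k. (norm (u k))\<^sup>2 \<le> d + 1 / (real k + 1)"
  shows "Cauchy u"
proof (rule metric_CauchyI)
  have dist_sq: "(dist (u k) (u l))\<^sup>2 \<le> 4 / (real (min k l) + 1)" for k l
  proof -
    have "(1/2::real) *\<^sub>R u k + (1/2::real) *\<^sub>R u l \<in> C"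
      using \<open>convex C\<close> u by (intro convexD) auto
    then have "4 * d \<le> (norm (u k + u l))\<^sup>2"
      using d by (fastforce simp: scaleR_add_right[symmetric] power2_eq_square)
    moreover have "(norm (u k + u l))\<^sup>2 + (norm (u k - u l))\<^sup>2 = 2 * (norm (u k))\<^sup>2 + 2 * (norm (u l))\<^sup>2"
      by (simp add: power2_norm_eq_inner inner_add_left inner_add_right inner_diff_left
          inner_diff_right inner_commute)
    moreover have "1 / (real k + 1) \<le> 1 / (real (min k l) + 1)" "1 / (real l + 1) \<le> 1 / (real (min k l) + 1)"
      by (simp_all add: frac_le)
    ultimately show ?thesis
      using u_bound[of k] u_bound[of l] by (simp add: dist_norm)
  qed
  fix e :: real assume "e > 0"
  obtain N :: nat where N: "4 / e\<^sup>2 < real N" using reals_Archimedean2 by blast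
  show "\<exists>N. \<forall>k\<ge>N. \<forall>l\<ge>N. dist (u k) (u l) < e"
  proof (intro exI allI impI)
    fix k l assume "k \<ge> N" "l \<ge> N"
    have "4 < real N * e\<^sup>2" using N \<open>e > 0\<close> by (simp add: field_simps)
    also have "\<dots> \<le> real (min k l) * e\<^sup>2"
      using \<open>k \<ge> N\<close> \<open>l \<ge> N\<close> by (intro mult_right_mono) auto
    also have "\<dots> < e\<^sup>2 * (real (min k l) + 1)"
      using \<open>e > 0\<close> by (simp add: algebra_simps)
    finally have "4 < e\<^sup>2 * (real (min k l) + 1)" .
    then have "4 / (real (min k l) + 1) < e\<^sup>2"
      by (simp add: pos_divide_less_eq)
    with dist_sq[of k l] have "(dist (u k) (u l))\<^sup>2 < e\<^sup>2" by linarith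
    then show "dist (u k) (u l) < e"
      using \<open>e > 0\<close> by (simp add: power_less_imp_less_base)
  qed
qed

lemma closed_convex_min_norm:
  fixes C :: "'a::{real_inner,complete_space} set"
  assumes "closed C" "convex C" "C \<noteq> {}"
  shows "\<exists>u0\<in>C. \<forall>u\<in>C. norm u0 \<le> norm u"
proof -
  define d where "d = Inf ((\<lambda>u. (norm u)\<^sup>2) ` C)"
  have bdd: "bdd_below ((\<lambda>u. (norm u)\<^sup>2) ` C)"
    by (rule bdd_belowI[of _ 0]) auto
  have d_le: "d \<le> (norm w)\<^sup>2" if "w \<in> C" for w
    unfolding d_def using that bdd by (auto intro: cInf_lower)
  have "\<exists>w\<in>C. (norm w)\<^sup>2 < d + 1 / (real k + 1)" for k
    using cInf_lessD[of "(\<lambda>u. (norm u)\<^sup>2) ` C" "d + 1 / (real k + 1)"] \<open>C \<noteq> {}\<close>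
    unfolding d_def by auto
  then obtain u where u: "\<And>k. u k \<in> C" and u_bound: "\<And>k. (norm (u k))\<^sup>2 < d + 1 / (real k + 1)"
    by metis
  have "Cauchy u"
    by (rule minimizing_sequence_Cauchy[OF \<open>convex C\<close> u d_le less_imp_le[OF u_bound]])
  then obtain u0 where lim: "u \<longlonglongrightarrow> u0"
    using Cauchy_convergent_iff convergent_def by blast
  have "u0 \<in> C"
    using \<open>closed C\<close> u lim by (rule closed_sequentially)
  have "(\<lambda>k. (norm (u k))\<^sup>2) \<longlonglongrightarrow> (norm u0)\<^sup>2"
    by (rule tendsto_power[OF tendsto_norm[OF lim]])
  moreover have "(\<lambda>k. 1 / (real k + 1)) \<longlonglongrightarrow> 0"
    using LIMSEQ_inverse_real_of_nat by (simp add: inverse_eq_divide add.commute)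
  then have "(\<lambda>k. d + 1 / (real k + 1)) \<longlonglongrightarrow> d"
    using tendsto_add[OF tendsto_const, of _ 0 sequentially d] by simp
  ultimately have "(norm u0)\<^sup>2 \<le> d"
    by (rule LIMSEQ_le) (use u_bound less_imp_le in blast)
  then have "(norm u0)\<^sup>2 \<le> (norm w)\<^sup>2" if "w \<in> C" for w
    using d_le[OF that] by linarith
  then show ?thesis
    using \<open>u0 \<in> C\<close> by (blast intro: power2_le_imp_le norm_ge_zero)
qed

lemma orthogonal_if_norm_minimal_on_line:
  fixes u0 v :: "'a::real_inner"
  assumes min: "\<And>t. norm u0 \<le> norm (u0 + t *\<^sub>R v)"
  shows "inner u0 v = 0"
proof -
  define p where "p = inner u0 v"
  define q where "q = (norm v)\<^sup>2"
  have quadratic: "0 \<le> 2 * t * p + t\<^sup>2 * q" for t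
  proof -
    have "(norm u0)\<^sup>2 \<le> (norm (u0 + t *\<^sub>R v))\<^sup>2"
      using min by (simp add: power_mono)
    also have "\<dots> = (norm u0)\<^sup>2 + 2 * t * p + t\<^sup>2 * q"
      unfolding p_def q_def power2_norm_eq_inner
      by (simp add: inner_add_left inner_add_right inner_commute power2_eq_square algebra_simps)
    finally show ?thesis by linarith
  qed
  define s where "s = 1 / (q + 1)"
  have "q \<ge> 0" by (simp add: q_def)
  then have "s > 0" "s * q \<le> 1"
    by (simp_all add: s_def field_simps)
  then have "s * (s * q - 2) < 0"
    by (simp add: mult_pos_neg)
  moreover have "0 \<le> p\<^sup>2 * (s * (s * q - 2))"
    using quadratic[of "- p * s"] by (simp add: power2_eq_square algebra_simps)
  ultimately have "p\<^sup>2 \<le> 0"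
    by (smt (verit) mult_pos_neg zero_le_power2)
  then show ?thesis
    unfolding p_def by simp
qed

lemma riesz_representation:
  fixes f :: "'a::{real_inner,complete_space} \<Rightarrow> real"
  assumes "bounded_linear f"
  shows "\<exists>z. \<forall>u. f u = inner z u"
proof (cases "\<forall>u. f u = 0")
  case True
  then show ?thesis by (intro exI[of _ 0]) simp
next
  case False
  interpret f: bounded_linear f by (rule assms)
  obtain u1 where "f u1 \<noteq> 0" using False by blast
  define C where "C = f -` {1}"
  have "closed C"
    unfolding C_def by (intro closed_vimage closed_singleton linear_continuous_on assms)
  moreover have "convex C"
    unfolding C_def convex_def by (simp add: f.add f.scaleR)
  moreover have "inverse (f u1) *\<^sub>R u1 \<in> C"
    using \<open>f u1 \<noteq> 0\<close> by (simp add: C_def f.scaleR)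
  ultimately have "\<exists>u0\<in>C. \<forall>u\<in>C. norm u0 \<le> norm u"
    by (intro closed_convex_min_norm) auto
  then obtain u0 where "u0 \<in> C" and u0_min: "\<And>u. u \<in> C \<Longrightarrow> norm u0 \<le> norm u"
    by blast
  then have "f u0 = 1" by (simp add: C_def)
  have kernel_orth: "inner u0 v = 0" if "f v = 0" for v
  proof (rule orthogonal_if_norm_minimal_on_line)
    fix t :: real
    have "u0 + t *\<^sub>R v \<in> C"
      using that \<open>f u0 = 1\<close> by (simp add: C_def f.add f.scaleR)
    then show "norm u0 \<le> norm (u0 + t *\<^sub>R v)" by (rule u0_min)
  qed
  show ?thesis
  proof (intro exI[of _ "inverse ((norm u0)\<^sup>2) *\<^sub>R u0"] allI)
    fix w
    have "inner u0 (w - f w *\<^sub>R u0) = 0"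
      using \<open>f u0 = 1\<close> by (intro kernel_orth) (simp add: f.diff f.scaleR)
    then have "inner u0 w = f w * (norm u0)\<^sup>2"
      by (simp add: inner_diff_right power2_norm_eq_inner)
    moreover have "u0 \<noteq> 0" using \<open>f u0 = 1\<close> by auto
    ultimately show "f w = inner (inverse ((norm u0)\<^sup>2) *\<^sub>R u0) w"
      by simp
  qed
qed

lemma adj_exists:
  fixes T :: "'a::{real_inner,complete_space} \<Rightarrow>\<^sub>L 'a"
  shows "\<exists>S::'a \<Rightarrow>\<^sub>L 'a. \<forall>x y. inner (T x) y = inner x (S y)"
proof -
  have "\<exists>z. \<forall>u. inner (T u) y = inner z u" for y
    by (intro riesz_representation bounded_linear_compose[OF bounded_linear_inner_left]
        blinfun.bounded_linear_right)
  then obtain g where g: "\<And>y u. inner (T u) y = inner (g y) u"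
    by metis
  have g_unique: "g y = w" if "\<And>u. inner (T u) y = inner w u" for y w
  proof -
    have "inner (g y - w) (g y - w) = 0"
      using g[where y = y and u = "g y - w"] that[of "g y - w"] by (simp add: inner_diff_left)
    then show ?thesis by simp
  qed
  have "bounded_linear g"
  proof (rule bounded_linear_intro)
    show "g (y1 + y2) = g y1 + g y2" for y1 y2
      by (rule g_unique) (simp add: g[symmetric] inner_add_left inner_add_right)
    show "g (r *\<^sub>R y) = r *\<^sub>R g y" for r y
      by (rule g_unique) (simp add: g[symmetric])
    show "norm (g y) \<le> norm y * norm T" for y
    proof -
      have "(norm (g y))\<^sup>2 = inner (T (g y)) y"
        by (simp add: g power2_norm_eq_inner)
      also have "\<dots> \<le> norm (T (g y)) * norm y"
        using Cauchy_Schwarz_ineq2 abs_ge_self order_trans by blast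
      also have "\<dots> \<le> norm T * norm (g y) * norm y"
        by (intro mult_right_mono norm_blinfun) auto
      finally show ?thesis
        by (cases "g y = 0") (simp_all add: power2_eq_square mult.commute)
    qed
  qed
  then show ?thesis
    by (intro exI[of _ "Blinfun g"]) (metis bounded_linear_Blinfun_apply g inner_commute)
qed

lemma adj_eqI:
  fixes T S :: "'a::{real_inner,complete_space} \<Rightarrow>\<^sub>L 'a"
  assumes "\<And>x y. inner (T x) y = inner x (S y)"
  shows "adj T = S"
  unfolding adj_def
proof (rule the_equality)
  fix S' :: "'a \<Rightarrow>\<^sub>L 'a"
  assume S': "\<forall>x y. inner (T x) y = inner x (S' y)"
  show "S' = S"
  proof (rule blinfun_eqI)
    fix y
    have "inner x (S' y - S y) = 0" for x
      using S' assms by (simp add: inner_diff_right)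
    then show "S' y = S y"
      using inner_eq_zero_iff[of "S' y - S y"] by simp
  qed
qed (use assms in blast)

lemma inner_adj_right: "inner x (adj T y) = inner (T x) y"
  using adj_exists[of T] adj_eqI by metis

lemma inner_adj_left: "inner (adj T x) y = inner x (T y)"
  by (metis inner_adj_right inner_commute)

lemma adj_compose: "adj (A o\<^sub>L B) = adj B o\<^sub>L adj A"
  by (rule adj_eqI) (simp add: inner_adj_right)

lemma adj_add: "adj (A + B) = adj A + adj B"
  by (rule adj_eqI) (simp add: inner_adj_right blinfun.bilinear_simps inner_add_left inner_add_right)

lemma adj_diff: "adj (A - B) = adj A - adj B"
  by (rule adj_eqI) (simp add: inner_adj_right blinfun.bilinear_simps inner_diff_left inner_diff_right)

lemma adj_uminus: "adj (- A) = - adj A"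
  by (rule adj_eqI) (simp add: inner_adj_right blinfun.bilinear_simps)

lemma adj_scaleR: "adj (r *\<^sub>R A) = r *\<^sub>R adj A"
  by (rule adj_eqI) (simp add: inner_adj_right blinfun.bilinear_simps)

lemma adj_id: "adj id_blinfun = id_blinfun"
  by (rule adj_eqI) simp

lemma adj_adj: "adj (adj A) = A"
  by (rule adj_eqI) (simp add: inner_adj_left)

lemma adj_sum: "adj (\<Sum>p\<in>P. A p) = (\<Sum>p\<in>P. adj (A p))"
  by (rule adj_eqI) (simp add: blinfun.sum_left inner_sum_left inner_sum_right inner_adj_right)

lemma norm_adj_le: "norm (adj T) \<le> norm T"
proof (rule norm_blinfun_bound)
  fix y
  have "(norm (adj T y))\<^sup>2 = inner (T (adj T y)) y"
    by (simp add: inner_adj_right[symmetric] power2_norm_eq_inner)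
  also have "\<dots> \<le> norm (T (adj T y)) * norm y"
    using Cauchy_Schwarz_ineq2 abs_ge_self order_trans by blast
  also have "\<dots> \<le> norm T * norm (adj T y) * norm y"
    by (intro mult_right_mono norm_blinfun) auto
  finally show "norm (adj T y) \<le> norm T * norm y"
    by (cases "adj T y = 0") (simp_all add: power2_eq_square mult.commute)
qed simp

lemma norm_adj: "norm (adj T) = norm T"
  using norm_adj_le[of T] norm_adj_le[of "adj T"] by (simp add: adj_adj)

section \<open>The Cayley transform\<close>

lemma neumann_inverse:
  fixes B :: "'a::{real_normed_vector,complete_space} \<Rightarrow>\<^sub>L 'a"
  assumes "norm B < 1"
  shows "\<exists>W. W o\<^sub>L (id_blinfun - B) = id_blinfun \<and> (id_blinfun - B) o\<^sub>L W = id_blinfun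
            \<and> norm W \<le> 1 / (1 - norm B)"
proof -
  \<comment> \<open>\<open>W y\<close> is the fixed point of the contraction \<open>u \<mapsto> y + B u\<close>\<close>
  have "\<exists>!u. y + B u = u" for y
    using banach_fix_type[of "norm B" "\<lambda>u. y + B u"] assms
    by (simp add: dist_norm blinfun.diff_right[symmetric] norm_blinfun)
  then obtain g where g: "\<And>y. y + B (g y) = g y" and g_unique: "\<And>y u. y + B u = u \<Longrightarrow> g y = u"
    by metis
  have norm_g: "norm (g y) \<le> norm y * (1 / (1 - norm B))" for y
  proof -
    have "norm (g y) \<le> norm y + norm B * norm (g y)"
      using g[of y] norm_triangle_ineq[of y "B (g y)"] norm_blinfun[of B "g y"] by simp
    then have "norm (g y) * (1 - norm B) \<le> norm y"
      by (simp add: algebra_simps)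
    then show ?thesis
      using assms by (simp add: pos_le_divide_eq)
  qed
  have "bounded_linear g"
  proof (rule bounded_linear_intro[OF _ _ norm_g])
    show "g (y1 + y2) = g y1 + g y2" for y1 y2
    proof (rule g_unique)
      have "(y1 + y2) + B (g y1 + g y2) = (y1 + B (g y1)) + (y2 + B (g y2))"
        by (simp add: blinfun.add_right algebra_simps)
      then show "(y1 + y2) + B (g y1 + g y2) = g y1 + g y2"
        by (simp add: g)
    qed
    show "g (r *\<^sub>R y) = r *\<^sub>R g y" for r y
      using g[of y] by (intro g_unique) (simp add: blinfun.scaleR_right scaleR_add_right[symmetric])
  qed
  then have W: "blinfun_apply (Blinfun g) = g"
    by (rule bounded_linear_Blinfun_apply)
  show ?thesis
  proof (intro exI[of _ "Blinfun g"] conjI)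
    show "Blinfun g o\<^sub>L (id_blinfun - B) = id_blinfun"
      by (rule blinfun_eqI) (simp add: W blinfun.diff_left g_unique)
    show "(id_blinfun - B) o\<^sub>L Blinfun g = id_blinfun"
      by (rule blinfun_eqI) (simp add: W blinfun.diff_left, metis g add_diff_cancel_right')
    show "norm (Blinfun g) \<le> 1 / (1 - norm B)"
      using assms norm_g by (intro norm_blinfun_bound) (simp_all add: W mult.commute)
  qed
qed

definition inv_id_minus :: "('a::real_normed_vector \<Rightarrow>\<^sub>L 'a) \<Rightarrow> ('a \<Rightarrow>\<^sub>L 'a)" where
  "inv_id_minus B = (SOME W. W o\<^sub>L (id_blinfun - B) = id_blinfun \<and> (id_blinfun - B) o\<^sub>L W = id_blinfun)"

lemma inv_id_minus:
  fixes B :: "'a::{real_normed_vector,complete_space} \<Rightarrow>\<^sub>L 'a"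
  assumes "norm B < 1"
  shows inv_id_minus_left: "inv_id_minus B o\<^sub>L (id_blinfun - B) = id_blinfun"
    and inv_id_minus_right: "(id_blinfun - B) o\<^sub>L inv_id_minus B = id_blinfun"
    and norm_inv_id_minus: "norm (inv_id_minus B) \<le> 1 / (1 - norm B)"
proof -
  obtain W where left: "W o\<^sub>L (id_blinfun - B) = id_blinfun" and right: "(id_blinfun - B) o\<^sub>L W = id_blinfun"
    and norm_W: "norm W \<le> 1 / (1 - norm B)"
    using neumann_inverse[OF assms] by blast
  have inverse: "inv_id_minus B o\<^sub>L (id_blinfun - B) = id_blinfun \<and> (id_blinfun - B) o\<^sub>L inv_id_minus B = id_blinfun"
    unfolding inv_id_minus_def
    by (rule someI[where P = "\<lambda>W. W o\<^sub>L (id_blinfun - B) = id_blinfun \<and> (id_blinfun - B) o\<^sub>L W = id_blinfun"])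
      (use left right in simp)
  then show "inv_id_minus B o\<^sub>L (id_blinfun - B) = id_blinfun" "(id_blinfun - B) o\<^sub>L inv_id_minus B = id_blinfun"
    by simp_all
  have "inv_id_minus B = W"
    using inverse right by (blast intro: blinfun_inverse_unique)
  with norm_W show "norm (inv_id_minus B) \<le> 1 / (1 - norm B)" by simp
qed

definition cayley :: "('a::real_normed_vector \<Rightarrow>\<^sub>L 'a) \<Rightarrow> ('a \<Rightarrow>\<^sub>L 'a)" where
  "cayley A = (id_blinfun + (1/2::real) *\<^sub>R A) o\<^sub>L inv_id_minus ((1/2::real) *\<^sub>R A)"

context
  fixes A :: "'a::{real_normed_vector,complete_space} \<Rightarrow>\<^sub>L 'a"
  assumes norm_A: "norm A < 2"
begin

private lemma norm_half: "norm ((1/2::real) *\<^sub>R A) < 1" "norm ((1/2::real) *\<^sub>R - A) < 1"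
  using norm_A by simp_all

lemma cayley_inverse:
  shows "cayley (- A) o\<^sub>L cayley A = id_blinfun" and "cayley A o\<^sub>L cayley (- A) = id_blinfun"
proof -
  define P where "P = id_blinfun + (1/2::real) *\<^sub>R A"
  define Q where "Q = id_blinfun - (1/2::real) *\<^sub>R A"
  define W where "W = inv_id_minus ((1/2::real) *\<^sub>R A)"
  define W' where "W' = inv_id_minus ((1/2::real) *\<^sub>R - A)"
  have QW: "Q o\<^sub>L W = id_blinfun" and WQ: "W o\<^sub>L Q = id_blinfun"
    unfolding Q_def W_def using inv_id_minus_right inv_id_minus_left norm_half by blast+
  have PW': "P o\<^sub>L W' = id_blinfun" and W'P: "W' o\<^sub>L P = id_blinfun"
    using inv_id_minus_right[OF norm_half(2)] inv_id_minus_left[OF norm_half(2)]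
    by (simp_all add: P_def W'_def)
  have cayley_A: "cayley A = P o\<^sub>L W" and cayley_minus_A: "cayley (- A) = Q o\<^sub>L W'"
    by (simp_all add: cayley_def P_def Q_def W_def W'_def)
  have "cayley (- A) o\<^sub>L cayley A = Q o\<^sub>L (W' o\<^sub>L P) o\<^sub>L W"
    by (simp add: cayley_A cayley_minus_A blinfun_compose_assoc)
  then show "cayley (- A) o\<^sub>L cayley A = id_blinfun"
    by (simp add: W'P QW)
  have "cayley A o\<^sub>L cayley (- A) = P o\<^sub>L (W o\<^sub>L Q) o\<^sub>L W'"
    by (simp add: cayley_A cayley_minus_A blinfun_compose_assoc)
  then show "cayley A o\<^sub>L cayley (- A) = id_blinfun"
    by (simp add: WQ PW')
qed

private lemma inv_id_minus_half_minus_id: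
  "inv_id_minus ((1/2::real) *\<^sub>R A) - id_blinfun = (1/2::real) *\<^sub>R (A o\<^sub>L inv_id_minus ((1/2::real) *\<^sub>R A))"
proof -
  have "(id_blinfun - (1/2::real) *\<^sub>R A) o\<^sub>L inv_id_minus ((1/2::real) *\<^sub>R A) = id_blinfun"
    by (rule inv_id_minus_right[OF norm_half(1)])
  then show ?thesis
    by (simp add: blinfun_compose.diff_left blinfun_compose.scaleR_left algebra_simps)
qed

lemma cayley_minus_id: "cayley A - id_blinfun = A o\<^sub>L inv_id_minus ((1/2::real) *\<^sub>R A)"
proof -
  define W where "W = inv_id_minus ((1/2::real) *\<^sub>R A)"
  have "cayley A - id_blinfun = (W - id_blinfun) + (1/2::real) *\<^sub>R (A o\<^sub>L W)"
    by (simp add: cayley_def W_def blinfun_compose.add_left blinfun_compose.scaleR_left algebra_simps)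
  also have "\<dots> = (1/2::real) *\<^sub>R (A o\<^sub>L W) + (1/2::real) *\<^sub>R (A o\<^sub>L W)"
    by (simp add: W_def inv_id_minus_half_minus_id)
  also have "\<dots> = A o\<^sub>L W"
    by (simp add: scaleR_add_left[symmetric])
  finally show ?thesis unfolding W_def .
qed

lemma cayley_minus_id_minus: "cayley A - id_blinfun - A = (1/2::real) *\<^sub>R (A o\<^sub>L (cayley A - id_blinfun))"
proof -
  have "cayley A - id_blinfun - A = A o\<^sub>L (inv_id_minus ((1/2::real) *\<^sub>R A) - id_blinfun)"
    by (simp add: cayley_minus_id blinfun_compose.diff_right)
  then show ?thesis
    by (simp add: inv_id_minus_half_minus_id cayley_minus_id blinfun_compose.scaleR_right)
qed

end

lemma norm_inv_id_minus_half:
  fixes A :: "'a::{real_normed_vector,complete_space} \<Rightarrow>\<^sub>L 'a"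
  assumes "norm A \<le> 1/3"
  shows "norm (inv_id_minus ((1/2::real) *\<^sub>R A)) \<le> 6/5"
proof -
  have "norm (inv_id_minus ((1/2::real) *\<^sub>R A)) \<le> 1 / (1 - norm ((1/2::real) *\<^sub>R A))"
    using assms by (intro norm_inv_id_minus) simp
  also have "\<dots> \<le> 6/5"
    using assms by (simp add: field_simps)
  finally show ?thesis .
qed

lemma norm_cayley_minus_id:
  fixes A :: "'a::{real_normed_vector,complete_space} \<Rightarrow>\<^sub>L 'a"
  assumes "norm A \<le> 1/3"
  shows "norm (cayley A - id_blinfun) \<le> 6/5 * norm A"
  using assms norm_blinfun_compose_le[OF order_refl norm_inv_id_minus_half[OF assms]]
  by (simp add: cayley_minus_id mult.commute)

lemma norm_cayley_minus_id_minus: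
  fixes A :: "'a::{real_normed_vector,complete_space} \<Rightarrow>\<^sub>L 'a"
  assumes "norm A \<le> 1/3"
  shows "norm (cayley A - id_blinfun - A) \<le> 3/5 * (norm A)\<^sup>2"
proof -
  have "norm (A o\<^sub>L (cayley A - id_blinfun)) \<le> norm A * (6/5 * norm A)"
    by (rule norm_blinfun_compose_le[OF order_refl norm_cayley_minus_id[OF assms]])
  then show ?thesis
    using assms by (simp add: cayley_minus_id_minus power2_eq_square)
qed

lemma inv_id_minus_half_diff:
  fixes A B :: "'a::{real_normed_vector,complete_space} \<Rightarrow>\<^sub>L 'a"
  assumes "norm A < 2" and "norm B < 2"
  shows "inv_id_minus ((1/2::real) *\<^sub>R A) - inv_id_minus ((1/2::real) *\<^sub>R B)
    = (1/2::real) *\<^sub>R (inv_id_minus ((1/2::real) *\<^sub>R A) o\<^sub>L (A - B) o\<^sub>L inv_id_minus ((1/2::real) *\<^sub>R B))"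
proof -
  define WA where "WA = inv_id_minus ((1/2::real) *\<^sub>R A)"
  define WB where "WB = inv_id_minus ((1/2::real) *\<^sub>R B)"
  have "WA o\<^sub>L (id_blinfun - (1/2::real) *\<^sub>R A) = id_blinfun"
    unfolding WA_def using assms by (intro inv_id_minus_left) simp
  moreover have "(id_blinfun - (1/2::real) *\<^sub>R B) o\<^sub>L WB = id_blinfun"
    unfolding WB_def using assms by (intro inv_id_minus_right) simp
  ultimately have "WA - WB = WA o\<^sub>L ((id_blinfun - (1/2::real) *\<^sub>R B) - (id_blinfun - (1/2::real) *\<^sub>R A)) o\<^sub>L WB"
    by (metis blinfun_compose.diff_left blinfun_compose.diff_right blinfun_compose_assoc blinfun_compose_id)
  then show ?thesis
    by (simp add: WA_def WB_def blinfun_compose.scaleR_left blinfun_compose.scaleR_right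
        blinfun_compose.diff_left blinfun_compose.diff_right algebra_simps)
qed

context
  fixes A B :: "'a::{real_normed_vector,complete_space} \<Rightarrow>\<^sub>L 'a" and a :: real
  assumes norm_A: "norm A \<le> a" and norm_B: "norm B \<le> a" and a: "a \<le> 1/3"
begin

private lemma norm_A3: "norm A \<le> 1/3" and norm_B3: "norm B \<le> 1/3" and a_nonneg: "0 \<le> a"
  using norm_A norm_B a norm_ge_zero[of A] by linarith+

lemma norm_inv_id_minus_half_diff:
  "norm (inv_id_minus ((1/2::real) *\<^sub>R A) - inv_id_minus ((1/2::real) *\<^sub>R B)) \<le> 18/25 * norm (A - B)"
proof -
  have "norm (inv_id_minus ((1/2::real) *\<^sub>R A) o\<^sub>L (A - B) o\<^sub>L inv_id_minus ((1/2::real) *\<^sub>R B))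
      \<le> 6/5 * norm (A - B) * (6/5)"
    by (intro norm_blinfun_compose_le norm_inv_id_minus_half norm_A3 norm_B3 order_refl)
  then show ?thesis
    using norm_A3 norm_B3 by (simp add: inv_id_minus_half_diff)
qed

lemma norm_cayley_diff: "norm (cayley A - cayley B) \<le> 36/25 * norm (A - B)"
proof -
  have "cayley A - cayley B = (A o\<^sub>L inv_id_minus ((1/2::real) *\<^sub>R A)) - (B o\<^sub>L inv_id_minus ((1/2::real) *\<^sub>R B))"
    using norm_A3 norm_B3 cayley_minus_id[of A] cayley_minus_id[of B] by (simp add: algebra_simps)
  also have "norm \<dots> \<le> norm (A - B) * norm (inv_id_minus ((1/2::real) *\<^sub>R A))
      + norm B * norm (inv_id_minus ((1/2::real) *\<^sub>R A) - inv_id_minus ((1/2::real) *\<^sub>R B))"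
    by (rule norm_blinfun_compose_diff)
  also have "\<dots> \<le> norm (A - B) * (6/5) + 1/3 * (18/25 * norm (A - B))"
    using norm_B3 by (intro add_mono mult_mono norm_inv_id_minus_half norm_A3
        norm_inv_id_minus_half_diff) auto
  finally show ?thesis by simp
qed

lemma norm_cayley_minus_id_minus_diff:
  "norm ((cayley A - id_blinfun - A) - (cayley B - id_blinfun - B)) \<le> 33/25 * a * norm (A - B)"
proof -
  have eq: "(cayley A - id_blinfun - A) - (cayley B - id_blinfun - B)
      = (1/2::real) *\<^sub>R ((A o\<^sub>L (cayley A - id_blinfun)) - (B o\<^sub>L (cayley B - id_blinfun)))"
    using norm_A3 norm_B3 by (simp add: cayley_minus_id_minus scaleR_diff_right)
  have "norm ((A o\<^sub>L (cayley A - id_blinfun)) - (B o\<^sub>L (cayley B - id_blinfun)))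
      \<le> norm (A - B) * norm (cayley A - id_blinfun) + norm B * norm (cayley A - cayley B)"
    using norm_blinfun_compose_diff[of A "cayley A - id_blinfun" B "cayley B - id_blinfun"] by simp
  also have "\<dots> \<le> norm (A - B) * (6/5 * a) + a * (36/25 * norm (A - B))"
  proof (rule add_mono)
    show "norm (A - B) * norm (cayley A - id_blinfun) \<le> norm (A - B) * (6/5 * a)"
      using norm_cayley_minus_id[OF norm_A3] norm_A by (intro mult_left_mono) auto
    show "norm B * norm (cayley A - cayley B) \<le> a * (36/25 * norm (A - B))"
      using norm_B norm_cayley_diff a_nonneg by (intro mult_mono) auto
  qed
  also have "\<dots> = 2 * (33/25 * a * norm (A - B))"
    by (simp add: algebra_simps)
  finally show ?thesis
    unfolding eq norm_scaleR by simp
qed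

end

definition cayley_remainder :: "('a::real_normed_vector \<Rightarrow>\<^sub>L 'a) \<Rightarrow> ('a \<Rightarrow>\<^sub>L 'a) \<Rightarrow> ('a \<Rightarrow>\<^sub>L 'a)" where
  "cayley_remainder A x = (cayley A o\<^sub>L x o\<^sub>L cayley (- A)) - x - ((A o\<^sub>L x) - (x o\<^sub>L A))"

lemma conj_minus_commut_expand:
  "(S o\<^sub>L x o\<^sub>L T) - x - ((A o\<^sub>L x) - (x o\<^sub>L A))
    = ((S - id_blinfun - A) o\<^sub>L x) + (x o\<^sub>L (T - id_blinfun - - A)) + ((S - id_blinfun) o\<^sub>L x o\<^sub>L (T - id_blinfun))"
  by (rule blinfun_eqI) (simp add: blinfun.bilinear_simps algebra_simps)

lemma norm_cayley_remainder:
  fixes A x :: "'a::{real_normed_vector,complete_space} \<Rightarrow>\<^sub>L 'a"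
  assumes "norm A \<le> 1/3"
  shows "norm (cayley_remainder A x) \<le> 66/25 * (norm A)\<^sup>2 * norm x"
proof -
  have K': "norm (cayley (- A) - id_blinfun) \<le> 6/5 * norm A"
    using norm_cayley_minus_id[of "- A"] assms by simp
  have "norm (cayley_remainder A x)
      \<le> norm ((cayley A - id_blinfun - A) o\<^sub>L x) + norm (x o\<^sub>L (cayley (- A) - id_blinfun - - A))
        + norm ((cayley A - id_blinfun) o\<^sub>L x o\<^sub>L (cayley (- A) - id_blinfun))"
    unfolding cayley_remainder_def conj_minus_commut_expand by (rule norm_add3_le)
  also have "\<dots> \<le> 3/5 * (norm A)\<^sup>2 * norm x + norm x * (3/5 * (norm A)\<^sup>2)
      + 6/5 * norm A * norm x * (6/5 * norm A)"
    using norm_cayley_minus_id_minus[of "- A"] assms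
    by (intro add_mono norm_blinfun_compose_le order_refl norm_cayley_minus_id_minus
        norm_cayley_minus_id K') simp_all
  also have "\<dots> = 66/25 * (norm A)\<^sup>2 * norm x"
    by (simp add: power2_eq_square algebra_simps)
  finally show ?thesis .
qed

lemma norm_cayley_quadratic_term_diff:
  fixes A B x :: "'a::{real_normed_vector,complete_space} \<Rightarrow>\<^sub>L 'a"
  assumes norm_A: "norm A \<le> a" and norm_B: "norm B \<le> a" and a: "a \<le> 1/3"
  shows "norm (((cayley A - id_blinfun) o\<^sub>L x o\<^sub>L (cayley (- A) - id_blinfun))
      - ((cayley B - id_blinfun) o\<^sub>L x o\<^sub>L (cayley (- B) - id_blinfun))) \<le> 432/125 * a * norm (A - B) * norm x"
proof -
  define d where "d = norm (A - B)"
  define K where "K C = cayley C - id_blinfun" for C :: "'a \<Rightarrow>\<^sub>L 'a"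
  have "0 \<le> a" using norm_A norm_ge_zero order_trans by blast
  have norm_K: "norm (K (- A)) \<le> 6/5 * a" "norm (K B o\<^sub>L x) \<le> 6/5 * a * norm x"
  proof -
    show "norm (K (- A)) \<le> 6/5 * a"
      using norm_cayley_minus_id[of "- A"] assms unfolding K_def by simp
    have "norm (K B o\<^sub>L x) \<le> 6/5 * norm B * norm x"
      unfolding K_def using assms by (intro norm_blinfun_compose_le norm_cayley_minus_id order_refl) simp
    also have "\<dots> \<le> 6/5 * a * norm x"
      using norm_B by (intro mult_right_mono) auto
    finally show "norm (K B o\<^sub>L x) \<le> 6/5 * a * norm x" .
  qed
  have diff_K: "norm ((K A o\<^sub>L x) - (K B o\<^sub>L x)) \<le> 36/25 * d * norm x" "norm (K (- A) - K (- B)) \<le> 36/25 * d"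
  proof -
    have "(K A o\<^sub>L x) - (K B o\<^sub>L x) = (cayley A - cayley B) o\<^sub>L x"
      by (simp add: K_def blinfun_compose.diff_left)
    then show "norm ((K A o\<^sub>L x) - (K B o\<^sub>L x)) \<le> 36/25 * d * norm x"
      unfolding d_def using norm_blinfun_compose_le[OF norm_cayley_diff[OF assms] order_refl] by simp
    show "norm (K (- A) - K (- B)) \<le> 36/25 * d"
      using norm_cayley_diff[of "- A" a "- B"] assms by (simp add: K_def d_def norm_minus_commute)
  qed
  have "norm ((K A o\<^sub>L x o\<^sub>L K (- A)) - (K B o\<^sub>L x o\<^sub>L K (- B)))
      \<le> norm ((K A o\<^sub>L x) - (K B o\<^sub>L x)) * norm (K (- A)) + norm (K B o\<^sub>L x) * norm (K (- A) - K (- B))"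
    by (rule norm_blinfun_compose_diff)
  also have "\<dots> \<le> 36/25 * d * norm x * (6/5 * a) + 6/5 * a * norm x * (36/25 * d)"
    using \<open>0 \<le> a\<close> norm_K diff_K by (intro add_mono mult_mono) (auto simp: d_def)
  finally show ?thesis
    by (simp add: K_def d_def algebra_simps)
qed

lemma norm_cayley_remainder_diff:
  fixes A B x :: "'a::{real_normed_vector,complete_space} \<Rightarrow>\<^sub>L 'a"
  assumes "norm A \<le> a" and "norm B \<le> a" and "a \<le> 1/3"
  shows "norm (cayley_remainder A x - cayley_remainder B x) \<le> 7 * a * norm (A - B) * norm x"
proof -
  define d where "d = norm (A - B)"
  have "0 \<le> a" using assms(1) norm_ge_zero order_trans by blast
  have "cayley_remainder A x - cayley_remainder B x
      = (((cayley A - id_blinfun - A) - (cayley B - id_blinfun - B)) o\<^sub>L x)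
        + (x o\<^sub>L ((cayley (- A) - id_blinfun - - A) - (cayley (- B) - id_blinfun - - B)))
        + (((cayley A - id_blinfun) o\<^sub>L x o\<^sub>L (cayley (- A) - id_blinfun))
          - ((cayley B - id_blinfun) o\<^sub>L x o\<^sub>L (cayley (- B) - id_blinfun)))"
    unfolding cayley_remainder_def conj_minus_commut_expand
    by (rule blinfun_eqI) (simp add: blinfun.bilinear_simps algebra_simps)
  then have "norm (cayley_remainder A x - cayley_remainder B x)
      \<le> norm (((cayley A - id_blinfun - A) - (cayley B - id_blinfun - B)) o\<^sub>L x)
        + norm (x o\<^sub>L ((cayley (- A) - id_blinfun - - A) - (cayley (- B) - id_blinfun - - B)))
        + norm (((cayley A - id_blinfun) o\<^sub>L x o\<^sub>L (cayley (- A) - id_blinfun))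
          - ((cayley B - id_blinfun) o\<^sub>L x o\<^sub>L (cayley (- B) - id_blinfun)))"
    by (simp only: norm_add3_le)
  also have "\<dots> \<le> 33/25 * a * d * norm x + norm x * (33/25 * a * d) + 432/125 * a * d * norm x"
  proof (intro add_mono norm_blinfun_compose_le order_refl)
    show "norm ((cayley A - id_blinfun - A) - (cayley B - id_blinfun - B)) \<le> 33/25 * a * d"
      unfolding d_def by (rule norm_cayley_minus_id_minus_diff[OF assms])
    show "norm ((cayley (- A) - id_blinfun - - A) - (cayley (- B) - id_blinfun - - B)) \<le> 33/25 * a * d"
      using norm_cayley_minus_id_minus_diff[of "- A" a "- B"] assms
      unfolding d_def by (simp add: norm_minus_commute)
  qed (unfold d_def, rule norm_cayley_quadratic_term_diff[OF assms])
  also have "\<dots> \<le> 7 * a * d * norm x"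
    using \<open>0 \<le> a\<close> by (simp add: d_def algebra_simps)
  finally show ?thesis unfolding d_def .
qed

lemma adj_cayley:
  fixes A :: "'a::{real_inner,complete_space} \<Rightarrow>\<^sub>L 'a"
  assumes "adj A = - A" and "norm A < 2"
  shows "adj (cayley A) = cayley (- A)"
proof -
  define P where "P = id_blinfun + (1/2::real) *\<^sub>R A"
  define Q where "Q = id_blinfun - (1/2::real) *\<^sub>R A"
  define W where "W = inv_id_minus ((1/2::real) *\<^sub>R A)"
  define W' where "W' = inv_id_minus ((1/2::real) *\<^sub>R - A)"
  have half: "norm ((1/2::real) *\<^sub>R A) < 1" "norm ((1/2::real) *\<^sub>R - A) < 1"
    using assms(2) by simp_all
  have "adj P = Q"
    using assms(1) by (simp add: P_def Q_def adj_add adj_scaleR adj_id)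
  have "Q o\<^sub>L W = id_blinfun"
    unfolding Q_def W_def by (rule inv_id_minus_right[OF half(1)])
  then have adj_W_P: "adj W o\<^sub>L P = id_blinfun"
    using arg_cong[of _ _ adj, OF \<open>Q o\<^sub>L W = id_blinfun\<close>] \<open>adj P = Q\<close> adj_adj[of P]
    by (metis adj_compose adj_id)
  have "P o\<^sub>L W' = id_blinfun" "W' o\<^sub>L P = id_blinfun"
    using inv_id_minus_right[OF half(2)] inv_id_minus_left[OF half(2)]
    by (simp_all add: P_def W'_def)
  have "adj W = W'"
    by (rule blinfun_inverse_unique[OF adj_W_P \<open>P o\<^sub>L W' = id_blinfun\<close>])
  have "P o\<^sub>L Q = Q o\<^sub>L P"
    by (simp add: P_def Q_def blinfun_compose.add_left blinfun_compose.add_right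
        blinfun_compose.diff_left blinfun_compose.diff_right algebra_simps)
  then have "W' o\<^sub>L Q = Q o\<^sub>L W'"
    by (rule inverse_commute[OF \<open>W' o\<^sub>L P = id_blinfun\<close> \<open>P o\<^sub>L W' = id_blinfun\<close>])
  have "adj (cayley A) = W' o\<^sub>L Q"
    by (simp add: cayley_def adj_compose P_def[symmetric] W_def[symmetric] \<open>adj W = W'\<close> \<open>adj P = Q\<close>)
  also have "\<dots> = Q o\<^sub>L W'" by fact
  also have "\<dots> = cayley (- A)"
    by (simp add: cayley_def Q_def W'_def)
  finally show ?thesis .
qed

section \<open>Fixed points of contractions of a box\<close>

lemma box_contraction_iterates_converge:
  fixes T :: "('p \<Rightarrow> real) \<Rightarrow> ('p \<Rightarrow> real)"
  assumes "0 \<le> r" "0 \<le> \<theta>" "\<theta> < 1"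
    and maps_box: "\<And>c. \<forall>p\<in>P. \<bar>c p\<bar> \<le> r \<Longrightarrow> \<forall>p\<in>P. \<bar>T c p\<bar> \<le> r"
    and contracts: "\<And>c c' s. \<forall>p\<in>P. \<bar>c p\<bar> \<le> r \<Longrightarrow> \<forall>p\<in>P. \<bar>c' p\<bar> \<le> r \<Longrightarrow>
        \<forall>p\<in>P. \<bar>c p - c' p\<bar> \<le> s \<Longrightarrow> \<forall>p\<in>P. \<bar>T c p - T c' p\<bar> \<le> \<theta> * s"
  shows "\<forall>k. \<forall>p\<in>P. \<bar>(T ^^ k) (\<lambda>_. 0) p\<bar> \<le> r"
    and "\<And>p. p \<in> P \<Longrightarrow> convergent (\<lambda>k. (T ^^ k) (\<lambda>_. 0) p)"
proof -
  define c where "c k = (T ^^ k) (\<lambda>_. 0)" for k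
  have box: "\<forall>p\<in>P. \<bar>c k p\<bar> \<le> r" for k
    by (induction k) (simp_all add: c_def \<open>0 \<le> r\<close> maps_box)
  then show "\<forall>k. \<forall>p\<in>P. \<bar>(T ^^ k) (\<lambda>_. 0) p\<bar> \<le> r"
    by (simp add: c_def)
  have step: "\<forall>p\<in>P. \<bar>c (Suc k) p - c k p\<bar> \<le> \<theta> ^ k * r" for k
  proof (induction k)
    case 0
    then show ?case using box[of 1] by (simp add: c_def)
  next
    case (Suc k)
    then show ?case
      using contracts[OF box box Suc] by (simp add: c_def mult.assoc)
  qed
  fix p assume "p \<in> P"
  have "summable (\<lambda>k. \<theta> ^ k * r)"
    using \<open>0 \<le> \<theta>\<close> \<open>\<theta> < 1\<close> by (intro summable_mult2) simp
  then have "summable (\<lambda>k. c (Suc k) p - c k p)"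
    by (rule summable_comparison_test[rotated]) (use step \<open>p \<in> P\<close> in auto)
  then have "convergent (\<lambda>k. \<Sum>i<k. c (Suc i) p - c i p)"
    by (simp only: summable_iff_convergent)
  moreover have "(\<Sum>i<k. c (Suc i) p - c i p) = c k p" for k
    using sum_lessThan_telescope[of "\<lambda>i. c i p" k] by (simp add: c_def)
  ultimately show "convergent (\<lambda>k. (T ^^ k) (\<lambda>_. 0) p)"
    by (simp add: c_def)
qed

lemma box_contraction_fixpoint:
  fixes T :: "('p \<Rightarrow> real) \<Rightarrow> ('p \<Rightarrow> real)"
  assumes "finite P" "0 \<le> r" "0 \<le> \<theta>" "\<theta> < 1"
    and maps_box: "\<And>c. \<forall>p\<in>P. \<bar>c p\<bar> \<le> r \<Longrightarrow> \<forall>p\<in>P. \<bar>T c p\<bar> \<le> r"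
    and contracts: "\<And>c c' s. \<forall>p\<in>P. \<bar>c p\<bar> \<le> r \<Longrightarrow> \<forall>p\<in>P. \<bar>c' p\<bar> \<le> r \<Longrightarrow>
        \<forall>p\<in>P. \<bar>c p - c' p\<bar> \<le> s \<Longrightarrow> \<forall>p\<in>P. \<bar>T c p - T c' p\<bar> \<le> \<theta> * s"
  shows "\<exists>c. (\<forall>p\<in>P. \<bar>c p\<bar> \<le> r) \<and> (\<forall>p\<in>P. T c p = c p)"
proof -
  define c where "c k = (T ^^ k) (\<lambda>_. 0)" for k
  have iterates: "\<And>k. \<forall>p\<in>P. \<bar>c k p\<bar> \<le> r" "\<And>p. p \<in> P \<Longrightarrow> convergent (\<lambda>k. c k p)"
    using box_contraction_iterates_converge[OF assms(2-4) maps_box contracts]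
    unfolding c_def by simp_all
  define L where "L p = lim (\<lambda>k. c k p)" for p
  have lim: "(\<lambda>k. c k p) \<longlonglongrightarrow> L p" if "p \<in> P" for p
    unfolding L_def using iterates(2)[OF that] by (simp add: convergent_LIMSEQ_iff)
  have L_box: "\<forall>p\<in>P. \<bar>L p\<bar> \<le> r"
  proof
    fix p assume "p \<in> P"
    show "\<bar>L p\<bar> \<le> r"
      by (rule LIMSEQ_le_const2[OF tendsto_rabs[OF lim[OF \<open>p \<in> P\<close>]]])
        (use iterates(1) \<open>p \<in> P\<close> in blast)
  qed
  define s where "s k = (\<Sum>q\<in>P. \<bar>L q - c k q\<bar>)" for k
  have "s \<longlonglongrightarrow> (\<Sum>q\<in>P. \<bar>L q - L q\<bar>)"
    unfolding s_def by (intro tendsto_sum tendsto_rabs tendsto_diff tendsto_const) (rule lim)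
  then have s_lim: "(\<lambda>k. \<theta> * s k) \<longlonglongrightarrow> 0"
    using tendsto_mult_right_zero by simp
  have "\<forall>p\<in>P. \<bar>L p - c k p\<bar> \<le> s k" for k
    unfolding s_def using \<open>finite P\<close> by (auto intro: member_le_sum)
  then have T_close: "\<forall>p\<in>P. \<bar>T L p - T (c k) p\<bar> \<le> \<theta> * s k" for k
    by (rule contracts[OF L_box iterates(1)])
  have T_lim: "(\<lambda>k. T (c k) p) \<longlonglongrightarrow> T L p" if "p \<in> P" for p
  proof (rule LIM_zero_cancel, rule Lim_null_comparison[OF _ s_lim])
    show "\<forall>\<^sub>F k in sequentially. norm (T (c k) p - T L p) \<le> \<theta> * s k"
      using T_close that by (simp add: abs_minus_commute)
  qed
  have "T L p = L p" if "p \<in> P" for p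
  proof (rule LIMSEQ_unique[OF T_lim[OF that]])
    show "(\<lambda>k. T (c k) p) \<longlonglongrightarrow> L p"
      using LIMSEQ_Suc[OF lim[OF that]] by (simp add: c_def)
  qed
  with L_box show ?thesis by blast
qed

section \<open>Tracial von Neumann algebras\<close>

lemma commutant_iff: "T \<in> commutant J S \<longleftrightarrow> (\<forall>s\<in>insert J S. T o\<^sub>L s = s o\<^sub>L T)"
  by (auto simp: commutant_def BH_def)

lemma commutant_add: "A \<in> commutant J S \<Longrightarrow> B \<in> commutant J S \<Longrightarrow> A + B \<in> commutant J S"
  by (simp add: commutant_iff blinfun_compose.add_left blinfun_compose.add_right)

lemma commutant_diff: "A \<in> commutant J S \<Longrightarrow> B \<in> commutant J S \<Longrightarrow> A - B \<in> commutant J S"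
  by (simp add: commutant_iff blinfun_compose.diff_left blinfun_compose.diff_right)

lemma commutant_scaleR: "A \<in> commutant J S \<Longrightarrow> r *\<^sub>R A \<in> commutant J S"
  by (simp add: commutant_iff blinfun_compose.scaleR_left blinfun_compose.scaleR_right)

lemma commutant_id: "id_blinfun \<in> commutant J S"
  by (simp add: commutant_iff)

lemma commutant_compose: "A \<in> commutant J S \<Longrightarrow> B \<in> commutant J S \<Longrightarrow> A o\<^sub>L B \<in> commutant J S"
  by (simp add: commutant_iff compose_commute)

lemma commutant_zero: "0 \<in> commutant J S"
  by (simp add: commutant_iff)

lemma commutant_sum: "(\<And>p. p \<in> P \<Longrightarrow> A p \<in> commutant J S) \<Longrightarrow> (\<Sum>p\<in>P. A p) \<in> commutant J S"
proof (induction P rule: infinite_finite_induct)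
  case (insert p P)
  then show ?case by (simp add: commutant_add)
qed (simp_all add: commutant_zero)

lemma commutant_inverse:
  "X \<in> commutant J S \<Longrightarrow> W o\<^sub>L X = id_blinfun \<Longrightarrow> X o\<^sub>L W = id_blinfun \<Longrightarrow> W \<in> commutant J S"
  by (auto simp: commutant_iff intro: inverse_commute)

lemma J_mem_commutant_commutant: "J \<in> commutant J (commutant J S)"
  by (auto simp: commutant_def BH_def)

locale tracial_algebra =
  fixes J :: "'h::{real_inner,complete_space} \<Rightarrow>\<^sub>L 'h"
    and M :: "('h \<Rightarrow>\<^sub>L 'h) set"
    and \<tau> :: "('h \<Rightarrow>\<^sub>L 'h) \<Rightarrow> complex"
  assumes tracial: "tracial_vNa J M \<tau>"
begin

lemma M_bicommutant: "commutant J (commutant J M) = M"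
  using tracial by (simp add: tracial_vNa_def von_neumann_algebra_def)

lemma M_adj: "A \<in> M \<Longrightarrow> adj A \<in> M"
  using tracial by (simp add: tracial_vNa_def von_neumann_algebra_def)

lemma M_add: "A \<in> M \<Longrightarrow> B \<in> M \<Longrightarrow> A + B \<in> M"
  and M_diff: "A \<in> M \<Longrightarrow> B \<in> M \<Longrightarrow> A - B \<in> M"
  and M_scaleR: "A \<in> M \<Longrightarrow> r *\<^sub>R A \<in> M"
  and M_compose: "A \<in> M \<Longrightarrow> B \<in> M \<Longrightarrow> A o\<^sub>L B \<in> M"
  and M_inverse: "X \<in> M \<Longrightarrow> W o\<^sub>L X = id_blinfun \<Longrightarrow> X o\<^sub>L W = id_blinfun \<Longrightarrow> W \<in> M"
  using commutant_add commutant_diff commutant_scaleR commutant_compose commutant_inverse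
  by (metis M_bicommutant)+

lemma M_uminus: "A \<in> M \<Longrightarrow> - A \<in> M"
  using M_scaleR[of A "-1"] by simp

lemma M_id: "id_blinfun \<in> M" and M_zero: "0 \<in> M" and M_J: "J \<in> M"
  using commutant_id commutant_zero J_mem_commutant_commutant by (metis M_bicommutant)+

lemma M_sum: "(\<And>p. p \<in> P \<Longrightarrow> A p \<in> M) \<Longrightarrow> (\<Sum>p\<in>P. A p) \<in> M"
  using commutant_sum[of P A J "commutant J M"] by (simp add: M_bicommutant)

lemma J_apply_J: "J (J u) = - u"
  using tracial unfolding tracial_vNa_def von_neumann_algebra_def cstruct_def
  by (metis blinfun_apply_blinfun_compose blinfun_apply_id_blinfun blinfun.minus_left)

lemma adj_J: "adj J = - J"
proof (rule adj_eqI)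
  fix u v
  have "inner (J u) v = inner (J (J u)) (J v)"
    using tracial by (simp add: tracial_vNa_def von_neumann_algebra_def cstruct_def)
  then show "inner (J u) v = inner u ((- J) v)"
    by (simp add: J_apply_J blinfun.minus_left)
qed

lemma M_commute_J: "A \<in> M \<Longrightarrow> A o\<^sub>L J = J o\<^sub>L A"
  using tracial by (auto simp: tracial_vNa_def von_neumann_algebra_def BH_def)

lemma tau_add: "A \<in> M \<Longrightarrow> B \<in> M \<Longrightarrow> \<tau> (A + B) = \<tau> A + \<tau> B"
  and tau_cscale: "A \<in> M \<Longrightarrow> \<tau> (cscale J c A) = c * \<tau> A"
  and tau_commute: "A \<in> M \<Longrightarrow> B \<in> M \<Longrightarrow> \<tau> (A o\<^sub>L B) = \<tau> (B o\<^sub>L A)"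
  and tau_id: "\<tau> id_blinfun = 1"
  and tau_adj_self_real: "A \<in> M \<Longrightarrow> \<tau> (adj A o\<^sub>L A) \<in> \<real>"
  and tau_adj_self_nonneg: "A \<in> M \<Longrightarrow> 0 \<le> Re (\<tau> (adj A o\<^sub>L A))"
  using tracial by (simp_all add: tracial_vNa_def tracial_state_def)

lemma tau_scaleR: "A \<in> M \<Longrightarrow> \<tau> (r *\<^sub>R A) = of_real r * \<tau> A"
  using tau_cscale[of A "of_real r"] by (simp add: cscale_def)

lemma tau_J_compose: "A \<in> M \<Longrightarrow> \<tau> (J o\<^sub>L A) = \<i> * \<tau> A"
  using tau_cscale[of A \<i>] by (simp add: cscale_def)

lemma tau_zero: "\<tau> 0 = 0"
  using tau_scaleR[OF M_zero, of 0] by simp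

lemma tau_uminus: "A \<in> M \<Longrightarrow> \<tau> (- A) = - \<tau> A"
  using tau_scaleR[of A "-1"] by simp

lemma tau_diff: "A \<in> M \<Longrightarrow> B \<in> M \<Longrightarrow> \<tau> (A - B) = \<tau> A - \<tau> B"
  using tau_add[of A "- B"] tau_uminus[of B] M_uminus[of B] by simp

lemma tau_sum: "(\<And>p. p \<in> P \<Longrightarrow> A p \<in> M) \<Longrightarrow> \<tau> (\<Sum>p\<in>P. A p) = (\<Sum>p\<in>P. \<tau> (A p))"
proof (induction P rule: infinite_finite_induct)
  case (insert p P)
  then show ?case by (simp add: tau_add M_sum)
qed (simp_all add: tau_zero)

lemma tau_selfadj_real:
  assumes "S \<in> M" and "adj S = S"
  shows "\<tau> S \<in> \<real>"
proof -
  define P where "P = id_blinfun + S"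
  define Q where "Q = id_blinfun - S"
  have "P \<in> M" "Q \<in> M"
    using assms M_id by (simp_all add: P_def Q_def M_add M_diff)
  \<comment> \<open>\<open>\<tau>\<close> is real on elements \<open>T\<^sup>* T\<close>, and \<open>4 S\<close> is a difference of two of them\<close>
  have "(4::real) *\<^sub>R S = 2 *\<^sub>R S + 2 *\<^sub>R S"
    by (simp flip: scaleR_add_left)
  then have "(adj P o\<^sub>L P) - (adj Q o\<^sub>L Q) = 4 *\<^sub>R S"
    unfolding P_def Q_def using assms(2)
    by (simp add: adj_add adj_diff adj_id blinfun_compose.add_left blinfun_compose.add_right
        blinfun_compose.diff_left blinfun_compose.diff_right algebra_simps scaleR_2)
  then have "of_real 4 * \<tau> S = \<tau> (adj P o\<^sub>L P) - \<tau> (adj Q o\<^sub>L Q)"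
    using \<open>P \<in> M\<close> \<open>Q \<in> M\<close> assms(1) by (metis tau_diff tau_scaleR M_compose M_adj)
  also have "\<dots> \<in> \<real>"
    using \<open>P \<in> M\<close> \<open>Q \<in> M\<close> by (intro Reals_diff tau_adj_self_real)
  finally show ?thesis
    by (simp add: complex_is_Real_iff)
qed

lemma tau_adj:
  assumes "X \<in> M"
  shows "\<tau> (adj X) = cnj (\<tau> X)"
proof -
  \<comment> \<open>write \<open>X = S + i K\<close> with \<open>S\<close>, \<open>K\<close> self-adjoint; multiplication by \<open>i\<close> is composition with \<open>J\<close>\<close>
  define S where "S = (1/2::real) *\<^sub>R (X + adj X)"
  define K where "K = (1/2::real) *\<^sub>R ((J o\<^sub>L adj X) - (J o\<^sub>L X))"
  have "adj X \<in> M" using assms by (rule M_adj)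
  then have "S \<in> M" "K \<in> M" "J o\<^sub>L K \<in> M"
    using assms M_J by (simp_all add: S_def K_def M_add M_diff M_scaleR M_compose)
  have "adj S = S"
    by (simp add: S_def adj_scaleR adj_add adj_adj add.commute)
  have "adj K = K"
    using M_commute_J[OF assms] M_commute_J[OF \<open>adj X \<in> M\<close>]
    by (simp add: K_def adj_scaleR adj_diff adj_compose adj_adj adj_J
        blinfun_compose.minus_right algebra_simps)
  have "X = S + (J o\<^sub>L K)" "adj X = S - (J o\<^sub>L K)"
    by (auto intro!: blinfun_eqI simp: S_def K_def blinfun.bilinear_simps J_apply_J algebra_simps
        scaleR_add_left[symmetric])
  then have "\<tau> X = \<tau> S + \<i> * \<tau> K" "\<tau> (adj X) = \<tau> S - \<i> * \<tau> K"
    using \<open>S \<in> M\<close> \<open>K \<in> M\<close> \<open>J o\<^sub>L K \<in> M\<close> by (metis tau_add tau_diff tau_J_compose)+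
  moreover have "\<tau> S \<in> \<real>" "\<tau> K \<in> \<real>"
    using tau_selfadj_real \<open>S \<in> M\<close> \<open>K \<in> M\<close> \<open>adj S = S\<close> \<open>adj K = K\<close> by blast+
  ultimately show ?thesis
    by (auto simp: Reals_cnj_iff complex_eq_iff)
qed

lemma Im_tau_selfadj_compose:
  assumes "S \<in> M" "adj S = S" and "Y \<in> M" "adj Y = Y"
  shows "Im (\<tau> (S o\<^sub>L Y)) = 0"
proof -
  have "cnj (\<tau> (S o\<^sub>L Y)) = \<tau> (Y o\<^sub>L S)"
    using assms by (simp add: tau_adj[symmetric] M_compose adj_compose)
  also have "\<dots> = \<tau> (S o\<^sub>L Y)"
    using assms by (simp add: tau_commute)
  finally show ?thesis by (simp add: complex_eq_iff)
qed

lemma tau_positive: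
  assumes "P \<in> M" and "positive_op P"
  shows "0 \<le> Re (\<tau> P)"
proof -
  \<comment> \<open>the axioms give positivity only on elements \<open>T\<^sup>* T\<close>; normality of \<open>\<tau>\<close>, applied to the
    directed set \<open>{0, P}\<close> with supremum \<open>P\<close>, gives it for every positive \<open>P\<close>\<close>
  have "positive_op 0" by (simp add: positive_op_def selfadj_def adj_eqI)
  then have "Re (\<tau> P) = (SUP a\<in>{0, P}. Re (\<tau> a))"
    using tracial assms M_zero unfolding tracial_vNa_def tracial_state_def
    by (elim conjE allE[of _ "{0, P}"] allE[of _ P] mp) (auto simp: op_le_def)
  also have "\<dots> = max 0 (Re (\<tau> P))"
    by (simp add: tau_zero cSup_eq_Max)
  finally show ?thesis by simp
qed

lemma Re_tau_selfadj_le_norm: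
  assumes "S \<in> M" and "adj S = S"
  shows "Re (\<tau> S) \<le> norm S"
proof -
  define P where "P = norm S *\<^sub>R id_blinfun - S"
  have "positive_op P"
    unfolding positive_op_def selfadj_def
  proof
    show "adj P = P" using assms(2) by (simp add: P_def adj_diff adj_scaleR adj_id)
    show "\<forall>u. 0 \<le> inner (P u) u"
    proof
      fix u
      have "inner (S u) u \<le> norm (S u) * norm u"
        using Cauchy_Schwarz_ineq2 abs_ge_self order_trans by blast
      also have "\<dots> \<le> norm S * norm u * norm u"
        by (intro mult_right_mono norm_blinfun) auto
      finally show "0 \<le> inner (P u) u"
        by (simp add: P_def blinfun.bilinear_simps inner_diff_left power2_norm_eq_inner[symmetric]
            power2_eq_square mult.assoc)
    qed
  qed
  moreover have "P \<in> M" using assms(1) M_id by (simp add: P_def M_diff M_scaleR)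
  ultimately have "0 \<le> Re (\<tau> P)" by (rule tau_positive[rotated])
  also have "\<tau> P = of_real (norm S) - \<tau> S"
    using assms(1) M_id by (simp add: P_def tau_diff M_scaleR tau_scaleR tau_id)
  finally show ?thesis by simp
qed

lemma abs_Re_tau_le_norm:
  assumes "X \<in> M"
  shows "\<bar>Re (\<tau> X)\<bar> \<le> norm X"
proof -
  define S where "S = (1/2::real) *\<^sub>R (X + adj X)"
  have "S \<in> M" using assms by (simp add: S_def M_adj M_add M_scaleR)
  have "adj S = S" by (simp add: S_def adj_scaleR adj_add adj_adj add.commute)
  have "Re (\<tau> S) = Re (\<tau> X)"
    using assms by (simp add: S_def tau_scaleR tau_add M_add M_adj tau_adj)
  moreover have "norm S \<le> norm X"
    using norm_triangle_ineq[of X "adj X"] by (simp add: S_def norm_adj)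
  moreover have "Re (\<tau> S) \<le> norm S" "Re (\<tau> (- S)) \<le> norm (- S)"
    using \<open>S \<in> M\<close> \<open>adj S = S\<close> M_uminus[of S] adj_uminus[of S]
    by (simp_all add: Re_tau_selfadj_le_norm del: norm_minus_cancel)
  ultimately show ?thesis
    using \<open>S \<in> M\<close> by (simp add: tau_uminus)
qed

lemma cayley_mem:
  assumes "A \<in> M" and "norm A < 2"
  shows "cayley A \<in> M"
proof -
  have "id_blinfun - (1/2::real) *\<^sub>R A \<in> M"
    using assms(1) by (simp add: M_id M_diff M_scaleR)
  moreover have "norm ((1/2::real) *\<^sub>R A) < 1" using assms(2) by simp
  ultimately have "inv_id_minus ((1/2::real) *\<^sub>R A) \<in> M"
    using M_inverse inv_id_minus_left inv_id_minus_right by blast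
  then show ?thesis
    using assms(1) by (simp add: cayley_def M_compose M_add M_id M_scaleR)
qed

lemma cayley_unitary:
  assumes "A \<in> M" and "adj A = - A" and "norm A < 2"
  shows "cayley A \<in> unitaries M"
  using cayley_mem[OF assms(1,3)] cayley_inverse[OF assms(3)] adj_cayley[OF assms(2,3)]
  by (simp add: unitaries_def)

lemma tau_commut_compose:
  assumes "A \<in> M" "X \<in> M" "Y \<in> M"
  shows "\<tau> (commut A X o\<^sub>L Y) = \<tau> (A o\<^sub>L commut X Y)"
proof -
  have "\<tau> (X o\<^sub>L A o\<^sub>L Y) = \<tau> (A o\<^sub>L (Y o\<^sub>L X))"
    using tau_commute[of X "A o\<^sub>L Y"] assms by (simp add: M_compose blinfun_compose_assoc)
  then show ?thesis
    using assms
    by (simp add: commut_def blinfun_compose.diff_left blinfun_compose.diff_right tau_diff M_compose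
        blinfun_compose_assoc)
qed

lemma cayley_remainder_mem:
  assumes "A \<in> M" "X \<in> M" "norm A < 2"
  shows "cayley_remainder A X \<in> M"
  using assms cayley_mem[of A] cayley_mem[of "- A"]
  by (simp add: cayley_remainder_def M_diff M_compose M_uminus)

lemma abs_Re_tau_cayley_remainder:
  assumes "A \<in> M" "X \<in> M" "Y \<in> M" "norm A \<le> 1/3"
  shows "\<bar>Re (\<tau> (cayley_remainder A X o\<^sub>L Y))\<bar> \<le> 66/25 * (norm A)\<^sup>2 * norm X * norm Y"
proof -
  have "cayley_remainder A X o\<^sub>L Y \<in> M"
    using assms by (simp add: cayley_remainder_mem M_compose)
  then have "\<bar>Re (\<tau> (cayley_remainder A X o\<^sub>L Y))\<bar> \<le> norm (cayley_remainder A X o\<^sub>L Y)"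
    by (rule abs_Re_tau_le_norm)
  also have "\<dots> \<le> 66/25 * (norm A)\<^sup>2 * norm X * norm Y"
    by (rule norm_blinfun_compose_le[OF norm_cayley_remainder[OF assms(4)] order_refl])
  finally show ?thesis .
qed

lemma abs_Re_tau_cayley_remainder_diff:
  assumes "A \<in> M" "B \<in> M" "X \<in> M" "Y \<in> M" "norm A \<le> a" "norm B \<le> a" "a \<le> 1/3"
  shows "\<bar>Re (\<tau> (cayley_remainder A X o\<^sub>L Y)) - Re (\<tau> (cayley_remainder B X o\<^sub>L Y))\<bar>
    \<le> 7 * a * norm (A - B) * norm X * norm Y"
proof -
  have mem: "cayley_remainder A X \<in> M" "cayley_remainder B X \<in> M"
    using assms by (simp_all add: cayley_remainder_mem)
  then have "Re (\<tau> (cayley_remainder A X o\<^sub>L Y)) - Re (\<tau> (cayley_remainder B X o\<^sub>L Y))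
      = Re (\<tau> ((cayley_remainder A X - cayley_remainder B X) o\<^sub>L Y))"
    using assms(4) by (simp add: blinfun_compose.diff_left tau_diff M_compose)
  also have "\<bar>\<dots>\<bar> \<le> norm ((cayley_remainder A X - cayley_remainder B X) o\<^sub>L Y)"
    using mem assms(4) by (intro abs_Re_tau_le_norm) (simp add: M_diff M_compose)
  also have "\<dots> \<le> 7 * a * norm (A - B) * norm X * norm Y"
    by (rule norm_blinfun_compose_le[OF norm_cayley_remainder_diff[OF assms(5-7)] order_refl])
  finally show ?thesis .
qed

end

section \<open>Commutators of two tuples\<close>

lemma cayley_parameter_bounds:
  fixes N \<epsilon> D :: real
  assumes "1 \<le> N" "0 \<le> \<epsilon>" "\<epsilon> \<le> 1" and hyp: "13 * N * sqrt \<epsilon> < D"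
  shows "0 < D" "0 \<le> N * \<epsilon> / D" "13 * (N * \<epsilon> / D) \<le> sqrt \<epsilon>"
    "169 * (N * \<epsilon> / D)\<^sup>2 \<le> \<epsilon>" "169 * N * (N * \<epsilon> / D) \<le> D"
proof -
  define t where "t = N * \<epsilon> / D"
  show "0 < D"
    using hyp assms(1,2) by (smt (verit) mult_nonneg_nonneg real_sqrt_ge_zero)
  then show "0 \<le> N * \<epsilon> / D"
    using assms(1,2) by simp
  have "N * (13 * sqrt \<epsilon> * t) \<le> N * (sqrt \<epsilon> * sqrt \<epsilon>)"
  proof -
    have "13 * N * sqrt \<epsilon> * t \<le> D * t"
      using hyp \<open>0 \<le> N * \<epsilon> / D\<close> by (intro mult_right_mono) (simp_all add: t_def)
    also have "\<dots> = N * \<epsilon>" using \<open>0 < D\<close> by (simp add: t_def)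
    finally show ?thesis using assms(2) by (simp add: algebra_simps)
  qed
  then have "sqrt \<epsilon> * (13 * t) \<le> sqrt \<epsilon> * sqrt \<epsilon>"
    using assms(1) by (simp add: algebra_simps)
  then show "13 * (N * \<epsilon> / D) \<le> sqrt \<epsilon>"
  proof (cases "\<epsilon> = 0")
    case False
    then have "0 < sqrt \<epsilon>" using assms(2) by simp
    with \<open>sqrt \<epsilon> * (13 * t) \<le> sqrt \<epsilon> * sqrt \<epsilon>\<close> show ?thesis
      unfolding t_def by (rule mult_left_le_imp_le)
  qed simp
  then have "(13 * t)\<^sup>2 \<le> (sqrt \<epsilon>)\<^sup>2"
    using \<open>0 \<le> N * \<epsilon> / D\<close> by (intro power_mono) (simp_all add: t_def)
  then have "169 * t\<^sup>2 \<le> \<epsilon>"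
    using assms(2) by (simp add: power_mult_distrib)
  then show "169 * (N * \<epsilon> / D)\<^sup>2 \<le> \<epsilon>"
    by (simp only: t_def)
  have "(13 * N * sqrt \<epsilon>)\<^sup>2 \<le> D\<^sup>2"
    using hyp assms(1,2) by (intro power_mono) simp_all
  then have "169 * N * (N * \<epsilon>) \<le> D * D"
    using assms(2) by (simp add: power_mult_distrib real_sqrt_pow2) (simp add: power2_eq_square algebra_simps)
  then show "169 * N * (N * \<epsilon> / D) \<le> D"
    using \<open>0 < D\<close> by (simp add: field_simps)
qed

locale commutator_tuples = tracial_algebra J M \<tau>
  for J :: "'h::{real_inner,complete_space} \<Rightarrow>\<^sub>L 'h" and M \<tau> +
  fixes m n :: nat and x y :: "nat \<Rightarrow> ('h \<Rightarrow>\<^sub>L 'h)"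
  assumes m_pos: "m \<ge> 1" and n_pos: "n \<ge> 1"
    and x_Msa1: "\<forall>i<m. x i \<in> Msa1 M" and y_Msa1: "\<forall>j<n. y j \<in> Msa1 M"
begin

abbreviation "N \<equiv> real (m * n)"
abbreviation "eps \<equiv> epsilon \<tau> m n x y"
abbreviation "del \<equiv> delta \<tau> m n x y"
abbreviation "gam \<equiv> gamma \<tau> m n x y"
abbreviation "D \<equiv> del\<^sup>2 - (N - 1) * gam"

definition "idx = {..<m} \<times> {..<n}"
definition "comm p = commut (x (fst p)) (y (snd p))"
definition "comb c = (\<Sum>q\<in>idx. c q *\<^sub>R comm q)"
definition "gram p q = Re (tip \<tau> (comm p) (comm q))"

lemma finite_idx: "finite idx"
  by (simp add: idx_def)

lemma card_idx: "real (card idx) = N"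
  by (simp add: idx_def card_cartesian_product)

lemma zero_in_idx: "(0, 0) \<in> idx"
  using m_pos n_pos by (simp add: idx_def)

lemma N_ge_1: "1 \<le> N"
proof -
  have "1 * 1 \<le> real m * real n"
    using m_pos n_pos by (intro mult_mono) auto
  then show ?thesis by simp
qed

lemma setcompr_idx: "{f i j | i j. i < m \<and> j < n} = (\<lambda>p. f (fst p) (snd p)) ` idx"
  by (auto simp: idx_def image_iff; blast)

lemma x_idx: "p \<in> idx \<Longrightarrow> x (fst p) \<in> M \<and> adj (x (fst p)) = x (fst p) \<and> norm (x (fst p)) \<le> 1"
  and y_idx: "p \<in> idx \<Longrightarrow> y (snd p) \<in> M \<and> adj (y (snd p)) = y (snd p) \<and> norm (y (snd p)) \<le> 1"
  using x_Msa1 y_Msa1 by (auto simp: idx_def Msa1_def selfadj_def)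

lemma comm_mem: "p \<in> idx \<Longrightarrow> comm p \<in> M"
  using x_idx y_idx by (simp add: comm_def commut_def M_diff M_compose)

lemma adj_comm: "p \<in> idx \<Longrightarrow> adj (comm p) = - comm p"
  using x_idx y_idx by (simp add: comm_def commut_def adj_diff adj_compose)

lemma norm_comm: "p \<in> idx \<Longrightarrow> norm (comm p) \<le> 2"
  using x_idx[of p] y_idx[of p] norm_triangle_ineq4[of "x (fst p) o\<^sub>L y (snd p)" "y (snd p) o\<^sub>L x (fst p)"]
    norm_blinfun_compose_le[of "x (fst p)" 1 "y (snd p)" 1]
    norm_blinfun_compose_le[of "y (snd p)" 1 "x (fst p)" 1]
  by (simp add: comm_def commut_def)

lemma comb_mem: "comb c \<in> M"
  using comm_mem by (simp add: comb_def M_sum M_scaleR)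

lemma adj_comb: "adj (comb c) = - comb c"
  by (simp add: comb_def adj_sum adj_scaleR adj_comm sum_negf[symmetric])

lemma comb_diff: "comb c - comb c' = comb (\<lambda>p. c p - c' p)"
  by (simp add: comb_def scaleR_diff_left sum_subtractf)

lemma norm_comb:
  assumes "\<forall>p\<in>idx. \<bar>c p\<bar> \<le> s"
  shows "norm (comb c) \<le> 2 * N * s"
proof -
  have "norm (comb c) \<le> (\<Sum>q\<in>idx. \<bar>c q\<bar> * norm (comm q))"
    unfolding comb_def by (rule order_trans[OF norm_sum]) simp
  also have "\<dots> \<le> (\<Sum>q\<in>idx. s * 2)"
    using assms norm_comm by (intro sum_mono mult_mono) auto
  also have "\<dots> = 2 * N * s"
    using card_idx by simp
  finally show ?thesis .
qed

lemma eps_ge: "p \<in> idx \<Longrightarrow> cmod (\<tau> (x (fst p) o\<^sub>L y (snd p))) \<le> eps"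
  unfolding epsilon_def setcompr_idx by (simp add: finite_idx)

lemma eps_nonneg: "0 \<le> eps"
  using eps_ge[OF zero_in_idx] norm_ge_zero order_trans by blast

lemma Im_tau_xy: "p \<in> idx \<Longrightarrow> Im (\<tau> (x (fst p) o\<^sub>L y (snd p))) = 0"
  using x_idx y_idx by (simp add: Im_tau_selfadj_compose)

lemma eps_le_1: "eps \<le> 1"
  unfolding epsilon_def setcompr_idx
proof (rule Max.boundedI)
  fix a assume "a \<in> (\<lambda>p. cmod (\<tau> (x (fst p) o\<^sub>L y (snd p)))) ` idx"
  then obtain p where "p \<in> idx" and a: "a = cmod (\<tau> (x (fst p) o\<^sub>L y (snd p)))" by auto
  then have "a = \<bar>Re (\<tau> (x (fst p) o\<^sub>L y (snd p)))\<bar>"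
    by (simp add: Im_tau_xy cmod_eq_Re)
  also have "\<dots> \<le> norm (x (fst p) o\<^sub>L y (snd p))"
    using x_idx[OF \<open>p \<in> idx\<close>] y_idx[OF \<open>p \<in> idx\<close>] by (simp add: abs_Re_tau_le_norm M_compose)
  also have "\<dots> \<le> 1 * 1"
    using x_idx[OF \<open>p \<in> idx\<close>] y_idx[OF \<open>p \<in> idx\<close>] by (intro norm_blinfun_compose_le) auto
  finally show "a \<le> 1" by simp
qed (use finite_idx zero_in_idx in auto)

lemma gram_diag: "p \<in> idx \<Longrightarrow> gram p p = (norm2 \<tau> (comm p))\<^sup>2"
  using tau_adj_self_nonneg[OF comm_mem] by (simp add: gram_def tip_def norm2_def)

lemma del_nonneg: "0 \<le> del"
  unfolding delta_def setcompr_idx[of "\<lambda>i j. norm2 \<tau> (commut (x i) (y j))"]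
  using finite_idx zero_in_idx tau_adj_self_nonneg[OF comm_mem]
  by (subst Min_ge_iff) (auto simp: norm2_def comm_def)

lemma del_sq_le_gram: "p \<in> idx \<Longrightarrow> del\<^sup>2 \<le> gram p p"
  unfolding gram_diag delta_def setcompr_idx[of "\<lambda>i j. norm2 \<tau> (commut (x i) (y j))"]
  using finite_idx del_nonneg by (intro power_mono) (auto simp: comm_def delta_def setcompr_idx)

lemma gam_nonneg: "0 \<le> gam"
  and abs_gram_le_gam: "p \<in> idx \<Longrightarrow> q \<in> idx \<Longrightarrow> p \<noteq> q \<Longrightarrow> \<bar>gram p q\<bar> \<le> gam"
proof -
  define S where "S = {cmod (tip \<tau> (commut (x i) (y j)) (commut (x i') (y j'))) | i j i' j'.
    i < m \<and> j < n \<and> i' < m \<and> j' < n \<and> (i, j) \<noteq> (i', j')}"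
  have "S \<subseteq> (\<lambda>(p, q). cmod (tip \<tau> (comm p) (comm q))) ` (idx \<times> idx)"
  proof
    fix s assume "s \<in> S"
    then obtain i j i' j' where "s = cmod (tip \<tau> (commut (x i) (y j)) (commut (x i') (y j')))"
      and "i < m" "j < n" "i' < m" "j' < n"
      by (auto simp: S_def)
    then show "s \<in> (\<lambda>(p, q). cmod (tip \<tau> (comm p) (comm q))) ` (idx \<times> idx)"
      by (auto simp: idx_def comm_def intro!: image_eqI[of _ _ "((i, j), (i', j'))"])
  qed
  then have "finite S"
    by (rule finite_subset) (simp add: finite_idx)
  then show "0 \<le> gam"
    unfolding gamma_def S_def[symmetric] by simp
  assume "p \<in> idx" "q \<in> idx" "p \<noteq> q"
  then have "cmod (tip \<tau> (comm p) (comm q)) \<in> S"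
    by (cases p, cases q) (auto simp: S_def idx_def comm_def)
  then have "cmod (tip \<tau> (comm p) (comm q)) \<le> gam"
    unfolding gamma_def S_def[symmetric] using \<open>finite S\<close> by simp
  then show "\<bar>gram p q\<bar> \<le> gam"
    unfolding gram_def using abs_Re_le_cmod order_trans by blast
qed

lemma Re_tau_comb_comm:
  assumes "p \<in> idx"
  shows "Re (\<tau> (comb c o\<^sub>L comm p)) = - (\<Sum>q\<in>idx. c q * gram p q)"
proof -
  have "\<tau> (comb c o\<^sub>L comm p) = (\<Sum>q\<in>idx. of_real (c q) * \<tau> (comm q o\<^sub>L comm p))"
    using assms comm_mem
    by (simp add: comb_def blinfun_compose.sum_left blinfun_compose.scaleR_left tau_sum
        M_scaleR M_compose tau_scaleR)
  also have "\<dots> = (\<Sum>q\<in>idx. of_real (c q) * - tip \<tau> (comm p) (comm q))"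
    using assms comm_mem
    by (intro sum.cong refl) (simp add: tip_def adj_comm blinfun_compose.minus_left tau_uminus M_compose)
  finally show ?thesis
    by (simp add: gram_def sum_negf)
qed

lemma Re_tau_conj_expand:
  assumes "p \<in> idx" and "norm (comb c) < 2"
  shows "Re (\<tau> (cayley (comb c) o\<^sub>L x (fst p) o\<^sub>L cayley (- comb c) o\<^sub>L y (snd p)))
    = Re (\<tau> (x (fst p) o\<^sub>L y (snd p))) - (\<Sum>q\<in>idx. c q * gram p q)
      + Re (\<tau> (cayley_remainder (comb c) (x (fst p)) o\<^sub>L y (snd p)))"
proof -
  define A where "A = comb c"
  define X where "X = x (fst p)"
  define Y where "Y = y (snd p)"
  have mem: "A \<in> M" "X \<in> M" "Y \<in> M" "cayley_remainder A X \<in> M"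
    using x_idx[OF assms(1)] y_idx[OF assms(1)] assms(2) comb_mem cayley_remainder_mem
    by (simp_all add: A_def X_def Y_def)
  have "cayley A o\<^sub>L X o\<^sub>L cayley (- A) o\<^sub>L Y = (X o\<^sub>L Y) + (commut A X o\<^sub>L Y) + (cayley_remainder A X o\<^sub>L Y)"
    by (simp add: cayley_remainder_def commut_def blinfun_compose.add_left blinfun_compose.diff_left)
  moreover have "commut A X \<in> M"
    using mem by (simp add: commut_def M_diff M_compose)
  ultimately have "\<tau> (cayley A o\<^sub>L X o\<^sub>L cayley (- A) o\<^sub>L Y)
      = \<tau> (X o\<^sub>L Y) + \<tau> (commut A X o\<^sub>L Y) + \<tau> (cayley_remainder A X o\<^sub>L Y)"
    using mem by (simp add: tau_add M_add M_compose)
  also have "\<tau> (commut A X o\<^sub>L Y) = \<tau> (A o\<^sub>L commut X Y)"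
    by (rule tau_commut_compose[OF mem(1-3)])
  finally show ?thesis
    using Re_tau_comb_comm[OF assms(1), of c] by (simp add: A_def X_def Y_def comm_def)
qed

definition "remainder_trace c p = Re (\<tau> (cayley_remainder (comb c) (x (fst p)) o\<^sub>L y (snd p)))"

lemma abs_remainder_trace_le:
  assumes "p \<in> idx" "norm (comb c) \<le> 1/3"
  shows "\<bar>remainder_trace c p\<bar> \<le> 66/25 * (norm (comb c))\<^sup>2"
  unfolding remainder_trace_def using x_idx[OF assms(1)] y_idx[OF assms(1)]
  by (intro order_trans[OF abs_Re_tau_cayley_remainder[OF comb_mem _ _ assms(2)]] mult_le_one_right)
    simp_all

lemma abs_remainder_trace_diff_le:
  assumes "p \<in> idx" "norm (comb c) \<le> a" "norm (comb c') \<le> a" "a \<le> 1/3"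
  shows "\<bar>remainder_trace c p - remainder_trace c' p\<bar> \<le> 7 * a * norm (comb c - comb c')"
proof -
  have "0 \<le> a"
    using assms(2) norm_ge_zero[of "comb c"] by linarith
  then show ?thesis
    unfolding remainder_trace_def using x_idx[OF assms(1)] y_idx[OF assms(1)]
    by (intro order_trans[OF abs_Re_tau_cayley_remainder_diff[OF comb_mem comb_mem _ _ assms(2-4)]]
        mult_le_one_right) simp_all
qed

text \<open>A fixed point \<open>c\<close> of \<open>jacobi_step\<close> makes all the traces \<open>Re \<tau>(v x\<^sub>i v\<^sup>* y\<^sub>j)\<close>,
  \<open>v = cayley (comb c)\<close>, vanish. Up to the quadratic remainder it is the Jacobi iteration for the
  linear system \<open>\<Sum>\<^sub>q c\<^sub>q gram p q = Re \<tau>(x\<^sub>i y\<^sub>j)\<close>, whose matrix is diagonally dominant: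
  the diagonal is at least \<open>del\<^sup>2\<close> and the off-diagonal entries are at most \<open>gam\<close>.\<close>

definition "jacobi_step c p
  = c p + Re (\<tau> (cayley (comb c) o\<^sub>L x (fst p) o\<^sub>L cayley (- comb c) o\<^sub>L y (snd p))) / gram p p"

lemma jacobi_step_eq:
  assumes "p \<in> idx" and "norm (comb c) < 2" and "gram p p \<noteq> 0"
  shows "jacobi_step c p
    = (Re (\<tau> (x (fst p) o\<^sub>L y (snd p))) - (\<Sum>q\<in>idx - {p}. c q * gram p q) + remainder_trace c p) / gram p p"
proof -
  have "(\<Sum>q\<in>idx. c q * gram p q) = c p * gram p p + (\<Sum>q\<in>idx - {p}. c q * gram p q)"
    by (rule sum.remove[OF finite_idx assms(1)])
  then show ?thesis
    using assms by (simp add: jacobi_step_def remainder_trace_def Re_tau_conj_expand field_simps)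
qed

lemma jacobi_step_diff:
  assumes "p \<in> idx" and "norm (comb c) < 2" and "norm (comb c') < 2" and "gram p p \<noteq> 0"
  shows "jacobi_step c p - jacobi_step c' p
    = (remainder_trace c p - remainder_trace c' p - (\<Sum>q\<in>idx - {p}. (c q - c' q) * gram p q)) / gram p p"
  using assms by (simp add: jacobi_step_eq field_simps sum_subtractf left_diff_distrib)

lemma tau_conj_eq_0_if_jacobi_fixed:
  assumes "p \<in> idx" and "norm (comb c) < 2" and "0 < gram p p" and "jacobi_step c p = c p"
  shows "\<tau> (cayley (comb c) o\<^sub>L x (fst p) o\<^sub>L cayley (- comb c) o\<^sub>L y (snd p)) = 0"
proof -
  define A where "A = comb c"
  have "A \<in> M" "adj A = - A" "norm A < 2"
    using assms(2) by (simp_all add: A_def comb_mem adj_comb)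
  have "Re (\<tau> (cayley A o\<^sub>L x (fst p) o\<^sub>L cayley (- A) o\<^sub>L y (snd p))) = 0"
    using assms(3,4) by (simp add: jacobi_step_def A_def)
  moreover have "Im (\<tau> (cayley A o\<^sub>L x (fst p) o\<^sub>L cayley (- A) o\<^sub>L y (snd p))) = 0"
  proof (rule Im_tau_selfadj_compose)
    have "adj (cayley (- A)) = cayley A"
      using adj_cayley[of "- A"] \<open>adj A = - A\<close> \<open>norm A < 2\<close> by (simp add: adj_uminus)
    then show "adj (cayley A o\<^sub>L x (fst p) o\<^sub>L cayley (- A)) = cayley A o\<^sub>L x (fst p) o\<^sub>L cayley (- A)"
      using x_idx[OF assms(1)] \<open>adj A = - A\<close> \<open>norm A < 2\<close>
      by (simp add: adj_compose adj_cayley blinfun_compose_assoc)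
    show "cayley A o\<^sub>L x (fst p) o\<^sub>L cayley (- A) \<in> M"
      using x_idx[OF assms(1)] \<open>A \<in> M\<close> \<open>norm A < 2\<close> by (simp add: cayley_mem M_uminus M_compose)
  qed (use y_idx[OF assms(1)] in simp_all)
  ultimately show ?thesis
    by (simp add: A_def complex_eq_iff)
qed

lemma abs_off_diag_sum_le:
  assumes "p \<in> idx" and "\<forall>q\<in>idx. \<bar>c q\<bar> \<le> s"
  shows "\<bar>\<Sum>q\<in>idx - {p}. c q * gram p q\<bar> \<le> (N - 1) * gam * s"
proof -
  have "\<And>q. q \<in> idx - {p} \<Longrightarrow> \<bar>gram p q\<bar> \<le> gam"
    using abs_gram_le_gam assms(1) by blast
  then have "\<bar>\<Sum>q\<in>idx - {p}. c q * gram p q\<bar> \<le> (\<Sum>q\<in>idx - {p}. s * gam)"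
    using assms(2)
    by (intro order_trans[OF sum_abs] sum_mono) (auto simp: abs_mult intro!: mult_mono)
  also have "\<dots> = (N - 1) * gam * s"
  proof -
    have "0 < card idx"
      using assms(1) finite_idx card_gt_0_iff by blast
    then have "real (card (idx - {p})) = N - 1"
      using assms(1) card_idx finite_idx by (simp add: card_Diff_singleton of_nat_diff)
    then show ?thesis by simp
  qed
  finally show ?thesis .
qed

lemma epsilon_eq_0:
  assumes "\<forall>p\<in>idx. \<tau> (x' (fst p) o\<^sub>L y (snd p)) = 0"
  shows "epsilon \<tau> m n x' y = 0"
proof -
  have "(\<lambda>p. cmod (\<tau> (x' (fst p) o\<^sub>L y (snd p)))) ` idx = {0}"
    using assms zero_in_idx by force
  then show ?thesis
    unfolding epsilon_def setcompr_idx by simp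
qed

context
  assumes hyp: "13 * N * sqrt eps < D"
begin

lemmas parameter_bounds = cayley_parameter_bounds[OF N_ge_1 eps_nonneg eps_le_1 hyp]

lemma gram_diag_ge: "p \<in> idx \<Longrightarrow> 0 < del\<^sup>2 \<and> del\<^sup>2 \<le> gram p p"
  using parameter_bounds(1) gam_nonneg N_ge_1 del_sq_le_gram[of p]
  by (smt (verit) mult_nonneg_nonneg)

lemma comb_bound_le_third: "4 * (N * eps / D) \<le> 1/3"
proof -
  have "sqrt eps \<le> 1"
    using eps_le_1 by simp
  then show ?thesis
    using parameter_bounds(3) by linarith
qed

lemma norm_comb_box:
  assumes "\<forall>p\<in>idx. \<bar>c p\<bar> \<le> 2 * eps / D"
  shows "norm (comb c) \<le> 4 * (N * eps / D)"
  using norm_comb[OF assms] by simp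

lemma jacobi_step_maps_box:
  assumes box: "\<forall>p\<in>idx. \<bar>c p\<bar> \<le> 2 * eps / D"
  shows "\<forall>p\<in>idx. \<bar>jacobi_step c p\<bar> \<le> 2 * eps / D"
proof
  fix p assume "p \<in> idx"
  define t where "t = N * eps / D"
  have gram: "0 < gram p p" "del\<^sup>2 \<le> gram p p"
    using gram_diag_ge[OF \<open>p \<in> idx\<close>] by linarith+
  have "norm (comb c) \<le> 4 * t" "4 * t \<le> 1/3"
    using norm_comb_box[OF box] comb_bound_le_third by (simp_all only: t_def)
  then have "\<bar>remainder_trace c p\<bar> \<le> 66/25 * (norm (comb c))\<^sup>2"
    using \<open>p \<in> idx\<close> by (intro abs_remainder_trace_le) simp_all
  also have "\<dots> \<le> 66/25 * (4 * t)\<^sup>2"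
    using \<open>norm (comb c) \<le> 4 * t\<close> by (intro mult_left_mono power_mono) auto
  also have "\<dots> \<le> eps"
    using parameter_bounds(4)[folded t_def] by (simp add: power_mult_distrib) (smt (verit) zero_le_power2)
  finally have "\<bar>Re (\<tau> (x (fst p) o\<^sub>L y (snd p))) - (\<Sum>q\<in>idx - {p}. c q * gram p q) + remainder_trace c p\<bar>
      \<le> eps + (N - 1) * gam * (2 * eps / D) + eps"
    using abs_off_diag_sum_le[OF \<open>p \<in> idx\<close> box] eps_ge[OF \<open>p \<in> idx\<close>] abs_Re_le_cmod
    by (smt (verit))
  also have "\<dots> = 2 * eps / D * del\<^sup>2"
    using parameter_bounds(1) by (simp add: field_simps)
  also have "\<dots> \<le> 2 * eps / D * gram p p"
    using gram eps_nonneg parameter_bounds(1) by (intro mult_left_mono) auto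
  finally show "\<bar>jacobi_step c p\<bar> \<le> 2 * eps / D"
    using gram \<open>norm (comb c) \<le> 4 * t\<close> \<open>4 * t \<le> 1/3\<close> \<open>p \<in> idx\<close>
    by (simp add: jacobi_step_eq abs_divide pos_divide_le_eq)
qed

lemma jacobi_step_contracts:
  assumes box: "\<forall>p\<in>idx. \<bar>c p\<bar> \<le> 2 * eps / D" "\<forall>p\<in>idx. \<bar>c' p\<bar> \<le> 2 * eps / D"
    and close: "\<forall>p\<in>idx. \<bar>c p - c' p\<bar> \<le> s"
  shows "\<forall>p\<in>idx. \<bar>jacobi_step c p - jacobi_step c' p\<bar> \<le> ((N - 1) * gam + 56 * N * (N * eps / D)) / del\<^sup>2 * s"
proof
  fix p assume "p \<in> idx"
  define t where "t = N * eps / D"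
  have "0 \<le> t" "4 * t \<le> 1/3" "norm (comb c) \<le> 4 * t" "norm (comb c') \<le> 4 * t"
    using parameter_bounds(2) comb_bound_le_third norm_comb_box[OF box(1)] norm_comb_box[OF box(2)]
    by (simp_all only: t_def)
  have "0 \<le> s" using close zero_in_idx by force
  have gram: "0 < del\<^sup>2" "del\<^sup>2 \<le> gram p p" "0 < gram p p"
    using gram_diag_ge[OF \<open>p \<in> idx\<close>] less_le_trans by blast+
  have "\<bar>remainder_trace c p - remainder_trace c' p\<bar> \<le> 7 * (4 * t) * norm (comb c - comb c')"
    using \<open>p \<in> idx\<close> \<open>norm (comb c) \<le> 4 * t\<close> \<open>norm (comb c') \<le> 4 * t\<close> \<open>4 * t \<le> 1/3\<close>
    by (rule abs_remainder_trace_diff_le)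
  also have "\<dots> \<le> 7 * (4 * t) * (2 * N * s)"
    unfolding comb_diff using close \<open>0 \<le> t\<close> by (intro mult_left_mono norm_comb) auto
  finally have "\<bar>remainder_trace c p - remainder_trace c' p\<bar> \<le> 56 * N * t * s"
    by (simp add: algebra_simps)
  moreover have "\<bar>\<Sum>q\<in>idx - {p}. (c q - c' q) * gram p q\<bar> \<le> (N - 1) * gam * s"
    using abs_off_diag_sum_le[OF \<open>p \<in> idx\<close>, of "\<lambda>q. c q - c' q"] close by simp
  ultimately have "\<bar>remainder_trace c p - remainder_trace c' p - (\<Sum>q\<in>idx - {p}. (c q - c' q) * gram p q)\<bar>
      \<le> (N - 1) * gam * s + 56 * N * t * s"
    by (smt (verit) abs_triangle_ineq4)
  moreover have "gram p p \<noteq> 0" "norm (comb c) < 2" "norm (comb c') < 2"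
    using gram \<open>norm (comb c) \<le> 4 * t\<close> \<open>norm (comb c') \<le> 4 * t\<close> \<open>4 * t \<le> 1/3\<close> by linarith+
  ultimately have "\<bar>jacobi_step c p - jacobi_step c' p\<bar> \<le> ((N - 1) * gam * s + 56 * N * t * s) / gram p p"
    using gram(3) by (simp add: jacobi_step_diff[OF \<open>p \<in> idx\<close>] abs_divide divide_right_mono)
  also have "\<dots> \<le> ((N - 1) * gam * s + 56 * N * t * s) / del\<^sup>2"
    using gram gam_nonneg N_ge_1 \<open>0 \<le> s\<close> \<open>0 \<le> t\<close>
    by (intro divide_left_mono mult_pos_pos) auto
  also have "\<dots> = ((N - 1) * gam + 56 * N * t) / del\<^sup>2 * s"
    by (simp add: field_simps)
  finally show "\<bar>jacobi_step c p - jacobi_step c' p\<bar> \<le> ((N - 1) * gam + 56 * N * (N * eps / D)) / del\<^sup>2 * s"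
    unfolding t_def .
qed

lemma jacobi_step_fixpoint:
  "\<exists>c. (\<forall>p\<in>idx. \<bar>c p\<bar> \<le> 2 * eps / D) \<and> (\<forall>p\<in>idx. jacobi_step c p = c p)"
proof (rule box_contraction_fixpoint[OF finite_idx _ _ _ jacobi_step_maps_box jacobi_step_contracts])
  show "0 \<le> 2 * eps / D"
    using eps_nonneg parameter_bounds(1) by simp
  show "0 \<le> ((N - 1) * gam + 56 * N * (N * eps / D)) / del\<^sup>2"
    by (rule divide_nonneg_nonneg[OF add_nonneg_nonneg[OF mult_nonneg_nonneg
          mult_nonneg_nonneg[OF _ parameter_bounds(2)]]])
      (use N_ge_1 gam_nonneg in simp_all)
  have "0 \<le> N * (N * eps / D)"
    by (rule mult_nonneg_nonneg[OF _ parameter_bounds(2)]) (use N_ge_1 in simp)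
  then have "56 * N * (N * eps / D) < D"
    using parameter_bounds(1,5) by (simp only: mult.assoc) linarith
  then show "((N - 1) * gam + 56 * N * (N * eps / D)) / del\<^sup>2 < 1"
    using gram_diag_ge[OF zero_in_idx] by simp
qed

lemma exists_unitary_conj_traceless:
  "\<exists>v \<in> unitaries M. norm (v - id_blinfun) \<le> 8 * N * eps / D \<and> 8 * N * eps / D \<le> 8 / 13 * sqrt eps
     \<and> epsilon \<tau> m n (conj_tuple v x) y = 0"
proof -
  obtain c where box: "\<forall>p\<in>idx. \<bar>c p\<bar> \<le> 2 * eps / D" and fixed: "\<forall>p\<in>idx. jacobi_step c p = c p"
    using jacobi_step_fixpoint by blast
  define t where "t = N * eps / D"
  have norm_comb_c: "norm (comb c) \<le> 4 * t" "norm (comb c) \<le> 1/3" "norm (comb c) < 2"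
    using norm_comb_box[OF box] comb_bound_le_third by (simp_all add: t_def)
  define v where "v = cayley (comb c)"
  have "v \<in> unitaries M"
    unfolding v_def using comb_mem adj_comb norm_comb_c(3) by (rule cayley_unitary)
  have "norm (v - id_blinfun) \<le> 6/5 * norm (comb c)"
    unfolding v_def by (rule norm_cayley_minus_id[OF norm_comb_c(2)])
  also have "\<dots> \<le> 8 * t"
    using norm_comb_c(1) parameter_bounds(2)[folded t_def] by linarith
  finally have "norm (v - id_blinfun) \<le> 8 * N * eps / D"
    by (simp add: t_def)
  moreover have "8 * N * eps / D \<le> 8 / 13 * sqrt eps"
    using parameter_bounds(3) by simp
  moreover have "\<tau> (conj_tuple v x (fst p) o\<^sub>L y (snd p)) = 0" if "p \<in> idx" for p
  proof -
    have "conj_tuple v x (fst p) = cayley (comb c) o\<^sub>L x (fst p) o\<^sub>L cayley (- comb c)"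
      using adj_comb norm_comb_c(3) by (simp add: conj_tuple_def v_def adj_cayley)
    moreover have "0 < gram p p"
      using gram_diag_ge[OF that] less_le_trans by blast
    ultimately show ?thesis
      using tau_conj_eq_0_if_jacobi_fixed[OF that norm_comb_c(3)] fixed that by simp
  qed
  then have "epsilon \<tau> m n (conj_tuple v x) y = 0"
    by (simp add: epsilon_eq_0)
  ultimately show ?thesis
    using \<open>v \<in> unitaries M\<close> by blast
qed
end

end

theorem lemma5p2:
  fixes J :: "'h::{real_inner,complete_space} \<Rightarrow>\<^sub>L 'h"
    and M :: "('h \<Rightarrow>\<^sub>L 'h) set"
    and \<tau> :: "('h \<Rightarrow>\<^sub>L 'h) \<Rightarrow> complex"
    and m n :: nat
    and x y :: "nat \<Rightarrow> ('h \<Rightarrow>\<^sub>L 'h)"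
  assumes "tracial_vNa J M \<tau>"
    and "m \<ge> 1" and "n \<ge> 1"
    and "\<forall>i<m. x i \<in> Msa1 M"
    and "\<forall>j<n. y j \<in> Msa1 M"
    and "13 * real (m * n) * sqrt (epsilon \<tau> m n x y)
           < (delta \<tau> m n x y)\<^sup>2 - (real (m * n) - 1) * gamma \<tau> m n x y"
  shows "\<exists>v \<in> unitaries M.
           norm (v - id_blinfun) \<le> 8 * real (m * n) * epsilon \<tau> m n x y
               / ((delta \<tau> m n x y)\<^sup>2 - (real (m * n) - 1) * gamma \<tau> m n x y)
         \<and> 8 * real (m * n) * epsilon \<tau> m n x y
               / ((delta \<tau> m n x y)\<^sup>2 - (real (m * n) - 1) * gamma \<tau> m n x y)
             \<le> 8 / 13 * sqrt (epsilon \<tau> m n x y)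
         \<and> epsilon \<tau> m n (conj_tuple v x) y = 0"
proof -
  interpret commutator_tuples J M \<tau> m n x y
    using assms(1-5) by unfold_locales
  show ?thesis
    by (rule exists_unitary_conj_traceless[OF assms(6)])
qed

end
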